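(* Let $S=(-1,1)^2$, let $W\ge 1$ be an integer, and let $$u(\xi,\eta)=\sum_{i=0}^{W}\sum_{j=0}^{W}a_{i,j}L_i(\xi)L_j(\eta),$$ where $a_{i,j}$ are real coefficients and $L_i$ denotes the Legendre polynomial of degree $i$. Then there exists an extension $U=Eu$ of $u$, i.e. a function $U$ on $\mathbb{R}^2$ with $U|_S=u$, such that $U\in H^4(\mathbb{R}^2)$ and $$\int_{\mathbb{R}^2}\left(U_{\xi\xi\xi\xi}^2+U_{\eta\eta\eta\eta}^2+U_{\xi\xi}^2+U_{\eta\eta}^2+U^2\right)d\xi\,d\eta\le K\int_{S}\left(u_{\xi\xi\xi\xi}^2+u_{\eta\eta\eta\eta}^2+u_{\xi\xi}^2+u_{\eta\eta}^2+u^2\right)d\xi\,d\eta,$$ where $K$ is a constant independent of $W$ (and of $u$).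
   Context: Subscripts denote partial derivatives, e.g. $u_{\xi\xi}=\partial^2u/\partial\xi^2$. $H^4(\mathbb{R}^2)$ is the usual Sobolev space of functions whose weak derivatives up to order $4$ lie in $L^2(\mathbb{R}^2)$. *)

theory Defs
  imports "HOL-Analysis.Analysis" "HOL-Computational_Algebra.Polynomial"
begin

text \<open>Standard Legendre polynomials via Bonnet's recurrence:
  P_0 = 1, P_1 = x, (n+2) P_{n+2} = (2n+3) x P_{n+1} - (n+1) P_n.\<close>
fun legendre :: "nat \<Rightarrow> real poly" where
  "legendre 0 = 1"
| "legendre (Suc 0) = [:0, 1:]"
| "legendre (Suc (Suc n)) =
     smult (1 / (real n + 2))
       (smult (2 * real n + 3) ([:0, 1:] * legendre (Suc n)) - smult (real n + 1) (legendre n))"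

definition S :: "(real \<times> real) set" where
  "S = {-1<..<1} \<times> {-1<..<1}"

definition leg_u :: "nat \<Rightarrow> (nat \<Rightarrow> nat \<Rightarrow> real) \<Rightarrow> real \<times> real \<Rightarrow> real" where
  "leg_u W a = (\<lambda>(\<xi>, \<eta>). \<Sum>i\<le>W. \<Sum>j\<le>W. a i j * poly (legendre i) \<xi> * poly (legendre j) \<eta>)"

section \<open>Classical partial derivatives (True = \<xi>-direction, False = \<eta>-direction)\<close>

definition dpar :: "bool \<Rightarrow> (real \<times> real \<Rightarrow> real) \<Rightarrow> real \<times> real \<Rightarrow> real" where
  "dpar d f = (\<lambda>(x, y). if d then deriv (\<lambda>t. f (t, y)) x else deriv (\<lambda>t. f (x, t)) y)"

fun dpars :: "bool list \<Rightarrow> (real \<times> real \<Rightarrow> real) \<Rightarrow> real \<times> real \<Rightarrow> real" where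
  "dpars [] f = f"
| "dpars (d # ds) f = dpar d (dpars ds f)"

definition test_fun :: "(real \<times> real \<Rightarrow> real) \<Rightarrow> bool" where
  "test_fun \<phi> \<longleftrightarrow>
     bounded {z. \<phi> z \<noteq> 0} \<and>
     (\<forall>ds. continuous_on UNIV (dpars ds \<phi>) \<and>
        (\<forall>x y. (\<lambda>t. dpars ds \<phi> (t, y)) differentiable (at x) \<and>
               (\<lambda>t. dpars ds \<phi> (x, t)) differentiable (at y)))"

definition weak_pderiv :: "bool list \<Rightarrow> (real \<times> real \<Rightarrow> real) \<Rightarrow> (real \<times> real \<Rightarrow> real) \<Rightarrow> bool" where
  "weak_pderiv ds U g \<longleftrightarrow>
     (\<forall>\<phi>. test_fun \<phi> \<longrightarrow>
        (\<integral>z. U z * dpars ds \<phi> z \<partial>lborel) = (-1) ^ length ds * (\<integral>z. g z * \<phi> z \<partial>lborel))"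

definition L2 :: "(real \<times> real \<Rightarrow> real) \<Rightarrow> bool" where
  "L2 f \<longleftrightarrow> f \<in> borel_measurable lborel \<and> integrable lborel (\<lambda>z. (f z)\<^sup>2)"

definition H4 :: "(real \<times> real \<Rightarrow> real) \<Rightarrow> bool" where
  "H4 U \<longleftrightarrow> L2 U \<and> (\<forall>ds. length ds \<le> 4 \<longrightarrow> (\<exists>g. L2 g \<and> weak_pderiv ds U g))"

end

theory Submission
  imports Defs
begin

text \<open>
  The extension is built one variable at a time from a universal operator on polynomials
  \<open>f\<close> on \<open>[-1, 1]\<close>. On \<open>[1, 2]\<close> it is \<open>\<chi>(t) \<Sum>\<^sub>k c\<^sub>k f(1 - (t - 1)/k)\<close>, a Hestenes-type
  reflection whose weights make all derivatives up to order 4 agree at \<open>t = 1\<close>, damped by a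
  polynomial cutoff \<open>\<chi>\<close> that is \<open>C\<^sup>4\<close>-flat at both ends (1 at 1, 0 at 2); on \<open>[-2, -1]\<close> it is the
  mirror image, and it vanishes outside \<open>[-2, 2]\<close>. The result is \<open>C\<^sup>4\<close> with compact support, so
  its classical derivatives are weak derivatives. The \<open>L\<^sup>2\<close> norms of its derivatives of order
  0, 2, 4 are bounded by those of \<open>f\<close> on \<open>[-1, 1]\<close> with a constant independent of \<open>f\<close>, hence of the
  degree: in the Leibniz expansion the odd derivatives of \<open>f\<close> only appear multiplied by
  derivatives of \<open>\<chi>\<close> vanishing at 1 and 2, and are removed by integrating by parts.

  For the tensor-product polynomial \<open>u\<close> the extension \<open>U = (E \<otimes> E) u\<close> has weak derivatives
  computed from the one-dimensional ones by Fubini's theorem, and each pure derivative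
  \<open>U\<^sub>\<xi>\<^sub>\<xi>\<^sub>\<xi>\<^sub>\<xi>\<close>, \<open>U\<^sub>\<xi>\<^sub>\<xi>\<close>, \<open>U\<close> is estimated by applying the one-dimensional bound first in \<open>\<eta>\<close>
  (with order 0) and then in \<open>\<xi>\<close>; the \<open>\<eta>\<close>-derivatives follow by symmetry.
\<close>

lemma has_real_derivative_glue:
  fixes f g f' g' :: "real \<Rightarrow> real"
  assumes "\<And>t. (f has_real_derivative f' t) (at t)" and "\<And>t. (g has_real_derivative g' t) (at t)"
    and "f c = g c" and "f' c = g' c"
  shows "((\<lambda>t. if t \<le> c then f t else g t) has_real_derivative (if t \<le> c then f' t else g' t)) (at t)"
proof -
  have closures: "closure {..c} \<inter> closure {c<..} = {c}" by auto
  have "((\<lambda>t. if t \<in> {..c} then f t else g t) has_derivative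
      (if t \<in> {..c} then (\<lambda>h. f' t * h) else (\<lambda>h. g' t * h))) (at t within ({..c} \<union> {c<..}))"
    by (rule has_derivative_If_within_closures)
       (use assms in \<open>auto simp: closures has_field_derivative_def intro: has_derivative_at_withinI\<close>)
  moreover have "{..c} \<union> {c<..} = (UNIV :: real set)" by auto
  ultimately show ?thesis
    unfolding has_field_derivative_def by (cases "t \<le> c") auto
qed

lemma continuous_on_glue:
  fixes f g :: "real \<Rightarrow> real"
  assumes "continuous_on UNIV f" "continuous_on UNIV g" "f c = g c"
  shows "continuous_on UNIV (\<lambda>t. if t \<le> c then f t else g t)"
proof -
  have "continuous_on ({..c} \<union> {c..}) (\<lambda>t. if t \<le> c then f t else g t)"
    by (rule continuous_on_cases) (use assms in \<open>auto intro: continuous_on_subset\<close>)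
  moreover have "{..c} \<union> {c..} = (UNIV :: real set)" by auto
  ultimately show ?thesis by simp
qed

definition glue_poly :: "real poly \<Rightarrow> real poly \<Rightarrow> real poly \<Rightarrow> real \<Rightarrow> real" where
  "glue_poly pl pm pr t =
     (if t \<le> -2 then 0 else if t \<le> -1 then poly pl t else if t \<le> 1 then poly pm t
      else if t \<le> 2 then poly pr t else 0)"

definition glue_compatible :: "real poly \<Rightarrow> real poly \<Rightarrow> real poly \<Rightarrow> bool" where
  "glue_compatible pl pm pr \<longleftrightarrow>
     poly pl (-2) = 0 \<and> poly pl (-1) = poly pm (-1) \<and> poly pm 1 = poly pr 1 \<and> poly pr 2 = 0"

lemma has_real_derivative_glue_poly:
  assumes "glue_compatible pl pm pr" "glue_compatible (pderiv pl) (pderiv pm) (pderiv pr)"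
  shows "(glue_poly pl pm pr has_real_derivative glue_poly (pderiv pl) (pderiv pm) (pderiv pr) t) (at t)"
proof -
  note compat = assms[unfolded glue_compatible_def]
  have zero: "\<And>t. ((\<lambda>t. 0::real) has_real_derivative 0) (at t)" by simp
  note poly = poly_DERIV
  have "((\<lambda>t. if t \<le> 2 then poly pr t else 0) has_real_derivative
      (if t \<le> 2 then poly (pderiv pr) t else 0)) (at t)" for t
    by (rule has_real_derivative_glue[OF poly zero]) (use compat in auto)
  then have "((\<lambda>t. if t \<le> 1 then poly pm t else if t \<le> 2 then poly pr t else 0) has_real_derivative
      (if t \<le> 1 then poly (pderiv pm) t else if t \<le> 2 then poly (pderiv pr) t else 0)) (at t)" for t
    by (rule has_real_derivative_glue[OF poly]) (use compat in auto)
  then have "((\<lambda>t. if t \<le> -1 then poly pl t else if t \<le> 1 then poly pm t else if t \<le> 2 then poly pr t else 0)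
      has_real_derivative (if t \<le> -1 then poly (pderiv pl) t else if t \<le> 1 then poly (pderiv pm) t
        else if t \<le> 2 then poly (pderiv pr) t else 0)) (at t)" for t
    by (rule has_real_derivative_glue[OF poly]) (use compat in auto)
  then have "((\<lambda>t. if t \<le> -2 then 0 else if t \<le> -1 then poly pl t else if t \<le> 1 then poly pm t
        else if t \<le> 2 then poly pr t else 0)
      has_real_derivative (if t \<le> -2 then 0 else if t \<le> -1 then poly (pderiv pl) t
        else if t \<le> 1 then poly (pderiv pm) t else if t \<le> 2 then poly (pderiv pr) t else 0)) (at t)"
    by (rule has_real_derivative_glue[OF zero]) (use compat in auto)
  then show ?thesis unfolding glue_poly_def[abs_def] by simp
qed

lemma continuous_on_glue_poly:
  assumes "glue_compatible pl pm pr"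
  shows "continuous_on UNIV (glue_poly pl pm pr)"
proof -
  note compat = assms[unfolded glue_compatible_def]
  have zero: "continuous_on UNIV (\<lambda>t::real. 0::real)" by simp
  have poly: "\<And>p::real poly. continuous_on UNIV (poly p)" by (intro continuous_intros)
  have "continuous_on UNIV (\<lambda>t. if t \<le> 2 then poly pr t else 0)"
    by (rule continuous_on_glue[OF poly zero]) (use compat in auto)
  then have "continuous_on UNIV (\<lambda>t. if t \<le> 1 then poly pm t else if t \<le> 2 then poly pr t else 0)"
    by (rule continuous_on_glue[OF poly]) (use compat in auto)
  then have "continuous_on UNIV
      (\<lambda>t. if t \<le> -1 then poly pl t else if t \<le> 1 then poly pm t else if t \<le> 2 then poly pr t else 0)"
    by (rule continuous_on_glue[OF poly]) (use compat in auto)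
  then have "continuous_on UNIV (\<lambda>t. if t \<le> -2 then 0 else if t \<le> -1 then poly pl t
      else if t \<le> 1 then poly pm t else if t \<le> 2 then poly pr t else 0)"
    by (rule continuous_on_glue[OF zero]) (use compat in auto)
  then show ?thesis unfolding glue_poly_def[abs_def] by simp
qed

lemma higher_pderiv_diff: "(pderiv ^^ n) (p - q) = (pderiv ^^ n) p - (pderiv ^^ n) q"
  for p q :: "'a::idom poly"
  by (induction n arbitrary: p q) (simp_all del: funpow.simps add: funpow_Suc_right pderiv_diff)

lemma higher_pderiv_pcompose_linear:
  "(pderiv ^^ m) (pcompose p [:a, b:]) = smult (b ^ m) (pcompose ((pderiv ^^ m) p) [:a, b:])"
  for p :: "'a::idom poly"
  by (induction m) (simp_all add: pderiv_smult pderiv_pcompose pderiv_pCons mult.commute)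

lemma pderiv_sum: "pderiv (sum f A) = (\<Sum>x\<in>A. pderiv (f x))"
  by (induction A rule: infinite_finite_induct) (simp_all add: pderiv_add)

lemma higher_pderiv_mult:
  "(pderiv ^^ n) (p * q) =
     (\<Sum>i\<le>n. smult (of_nat (n choose i)) ((pderiv ^^ i) p * (pderiv ^^ (n - i)) q))"
  for p q :: "'a::idom poly"
proof (induction n)
  case (Suc n)
  define T where "T i = (pderiv ^^ i) p * (pderiv ^^ (Suc n - i)) q" for i
  have "(pderiv ^^ Suc n) (p * q) = (\<Sum>i\<le>n. smult (of_nat (n choose i)) (T i + T (Suc i)))"
    by (simp add: Suc.IH T_def pderiv_sum pderiv_smult pderiv_mult Suc_diff_le algebra_simps)
  also have "\<dots> = (\<Sum>i\<le>n. smult (of_nat (n choose i)) (T i))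
      + (\<Sum>i\<le>n. smult (of_nat (n choose i)) (T (Suc i)))"
    by (simp add: smult_add_right sum.distrib)
  also have "(\<Sum>i\<le>n. smult (of_nat (n choose i)) (T i))
      = T 0 + (\<Sum>i\<le>n. smult (of_nat (n choose Suc i)) (T (Suc i)))"
    using sum.atMost_Suc_shift[of "\<lambda>i. smult (of_nat (n choose i)) (T i)" n]
    by (simp add: binomial_eq_0 del: sum.atMost_Suc_shift)
  also have "T 0 + (\<Sum>i\<le>n. smult (of_nat (n choose Suc i)) (T (Suc i)))
      + (\<Sum>i\<le>n. smult (of_nat (n choose i)) (T (Suc i)))
      = (\<Sum>i\<le>Suc n. smult (of_nat (Suc n choose i)) (T i))"
    by (simp only: sum.atMost_Suc_shift binomial_Suc_Suc of_nat_add smult_add_left sum.distrib)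
       (simp add: algebra_simps)
  finally show ?case by (simp add: T_def)
qed simp

definition flat_upto :: "nat \<Rightarrow> 'a::{comm_semiring_1,semiring_no_zero_divisors} poly \<Rightarrow> 'a \<Rightarrow> bool" where
  "flat_upto n h c \<longleftrightarrow> (\<forall>m\<le>n. poly ((pderiv ^^ m) h) c = 0)"

lemma flat_upto_0 [simp]: "flat_upto 0 h c \<longleftrightarrow> poly h c = 0"
  by (simp add: flat_upto_def)

lemma flat_upto_Suc: "flat_upto (Suc n) h c \<longleftrightarrow> poly h c = 0 \<and> flat_upto n (pderiv h) c"
proof
  assume "flat_upto (Suc n) h c"
  then show "poly h c = 0 \<and> flat_upto n (pderiv h) c"
    unfolding flat_upto_def by (metis Suc_le_mono funpow_0 funpow_Suc_right o_apply zero_le)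
next
  assume *: "poly h c = 0 \<and> flat_upto n (pderiv h) c"
  show "flat_upto (Suc n) h c"
    unfolding flat_upto_def
  proof (intro allI impI)
    fix m assume "m \<le> Suc n"
    then show "poly ((pderiv ^^ m) h) c = 0"
      using * unfolding flat_upto_def
      by (cases m) (auto simp: funpow_Suc_right simp del: funpow.simps)
  qed
qed

lemma flat_upto_mono: "flat_upto n h c \<Longrightarrow> m \<le> n \<Longrightarrow> flat_upto m h c"
  by (auto simp: flat_upto_def)

lemma flat_upto_add: "flat_upto n h c \<Longrightarrow> flat_upto n r c \<Longrightarrow> flat_upto n (h + r) c"
  by (simp add: flat_upto_def higher_pderiv_add)

lemma flat_upto_smult: "flat_upto n h c \<Longrightarrow> flat_upto n (smult a h) c"
  by (simp add: flat_upto_def higher_pderiv_smult)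

lemma flat_upto_mult_left: "flat_upto n h c \<Longrightarrow> flat_upto n (r * h) c"
  for h r :: "'a::{comm_semiring_1,semiring_no_zero_divisors} poly"
proof (induction n arbitrary: r h)
  case (Suc n)
  then have "poly h c = 0" "flat_upto n (pderiv h) c" "flat_upto n h c"
    using flat_upto_mono[OF Suc.prems, of n] by (auto simp: flat_upto_Suc)
  moreover have "flat_upto n (r * pderiv h + pderiv r * h) c"
    using Suc.IH calculation by (intro flat_upto_add) auto
  ultimately show ?case
    by (simp add: flat_upto_Suc pderiv_mult ac_simps)
qed simp

lemma flat_upto_mult_right: "flat_upto n h c \<Longrightarrow> flat_upto n (h * r) c"
  for h r :: "'a::{comm_semiring_1,semiring_no_zero_divisors} poly"
  using flat_upto_mult_left[of n h c r] by (simp add: mult.commute)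

lemma flat_upto_1_square: "poly p c = 0 \<Longrightarrow> flat_upto 1 (p * p) c"
  for p :: "'a::{comm_semiring_1,semiring_no_zero_divisors} poly"
  by (simp add: flat_upto_Suc pderiv_mult)

lemma flat_upto_linear_power: "flat_upto n ([:-c, 1:] ^ Suc n) c"
  for c :: "'a::idom"
proof (induction n)
  case (Suc n)
  have "pderiv ([:-c, 1:] ^ Suc (Suc n)) = smult (of_nat (Suc (Suc n))) ([:-c, 1:] ^ Suc n)"
    by (simp only: pderiv_power_Suc) (simp add: pderiv_pCons)
  then show ?case using Suc.IH by (simp add: flat_upto_Suc flat_upto_smult)
qed simp

lemma flat_upto_pcompose_linear:
  "flat_upto n h (a + b * c) \<Longrightarrow> flat_upto n (pcompose h [:a, b:]) c"
  for h :: "'a::idom poly"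
  by (simp add: flat_upto_def higher_pderiv_pcompose_linear poly_pcompose mult.commute)

section \<open>The one-dimensional extension operator\<close>

text \<open>\<open>step_down\<close> is one minus the smoothstep polynomial of degree 9: it falls from 1 at 0 to 0 at 1,
  and its derivative \<open>-630 t\<^sup>4 (1 - t)\<^sup>4\<close> vanishes to fourth order at both ends.\<close>

definition step_down :: "real poly" where
  "step_down = [:1, 0, 0, 0, 0, -126, 420, -540, 315, -70:]"

definition cutoff :: "real poly" where
  "cutoff = pcompose step_down [:-1, 1:]"

lemma pderiv_step_down: "pderiv step_down = smult (-630) ([:0, 1:] ^ 4 * [:-1, 1:] ^ 4)"
  unfolding step_down_def by (simp add: pderiv_pCons eval_nat_numeral)

lemma flat_upto_pderiv_cutoff:
  assumes "c = 1 \<or> c = 2"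
  shows "flat_upto 3 (pderiv cutoff) c"
proof -
  have "pderiv cutoff = pcompose (pderiv step_down) [:-1, 1:]"
    using higher_pderiv_pcompose_linear[of 1 step_down "-1" 1] by (simp add: cutoff_def)
  moreover have "flat_upto 3 (pderiv step_down) (c - 1)"
  proof -
    have four: "Suc 3 = 4" by simp
    have "flat_upto 3 ([:-0, 1:] ^ 4) (0::real)" "flat_upto 3 ([:-1, 1:] ^ 4) (1::real)"
      using flat_upto_linear_power[of 3, unfolded four] by blast+
    then have "flat_upto 3 ([:0, 1:] ^ 4 * [:-1, 1:] ^ 4) (c - 1)"
      using assms by (auto intro: flat_upto_mult_left flat_upto_mult_right)
    then show ?thesis
      unfolding pderiv_step_down by (rule flat_upto_smult)
  qed
  ultimately show ?thesis
    by (simp add: flat_upto_pcompose_linear)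
qed

lemma poly_higher_pderiv_cutoff_eq_0:
  assumes "1 \<le> i" "i \<le> 4" "c = 1 \<or> c = 2"
  shows "poly ((pderiv ^^ i) cutoff) c = 0"
proof -
  obtain m where "i = Suc m" "m \<le> 3" using assms(1,2) by (cases i) auto
  then show ?thesis
    using flat_upto_pderiv_cutoff[OF assms(3)]
    by (simp add: flat_upto_def funpow_Suc_right del: funpow.simps)
qed

lemma flat_upto_cutoff_1: "flat_upto 4 (cutoff - 1) 1"
  using flat_upto_pderiv_cutoff[of 1]
  by (simp add: flat_upto_Suc[of 3, simplified] pderiv_diff cutoff_def step_down_def poly_pcompose)

lemma flat_upto_cutoff_2: "flat_upto 4 cutoff 2"
  using flat_upto_pderiv_cutoff[of 2]
  by (simp add: flat_upto_Suc[of 3, simplified] cutoff_def step_down_def poly_pcompose)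

text \<open>The unique solution of \<open>\<Sum>\<^sub>k\<^sub>=\<^sub>1\<^sup>5 c\<^sub>k (-1/k)\<^sup>m = 1\<close> for \<open>m = 0, \<dots>, 4\<close>; for \<open>t \<in> [1, 2]\<close>
  the reflection \<open>hestenes\<close> only samples \<open>f\<close> at \<open>1 - (t - 1)/k \<in> [1 - 1/k, 1]\<close>.\<close>

definition hestenes_coeff :: "nat \<Rightarrow> real" where
  "hestenes_coeff k = [15, -640, 3645, -6144, 3125] ! (k - 1)"

definition hestenes :: "real poly \<Rightarrow> real poly" where
  "hestenes f = (\<Sum>k\<in>{1..5}. smult (hestenes_coeff k) (pcompose f [:1 + 1 / real k, -1 / real k:]))"

definition right_ext :: "real poly \<Rightarrow> real poly" where
  "right_ext f = cutoff * hestenes f"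

definition mirror :: "real poly \<Rightarrow> real poly" where
  "mirror p = pcompose p [:0, -1:]"

definition left_ext :: "real poly \<Rightarrow> real poly" where
  "left_ext f = mirror (right_ext (mirror f))"

text \<open>\<open>ext1 m f\<close> is the \<open>m\<close>-th derivative of the extension of \<open>f\<close>.\<close>

definition ext1 :: "nat \<Rightarrow> real poly \<Rightarrow> real \<Rightarrow> real" where
  "ext1 m f = glue_poly ((pderiv ^^ m) (left_ext f)) ((pderiv ^^ m) f) ((pderiv ^^ m) (right_ext f))"

lemma higher_pderiv_hestenes:
  "(pderiv ^^ m) (hestenes f) =
     (\<Sum>k\<in>{1..5}. smult (hestenes_coeff k * (-1 / real k) ^ m)
        (pcompose ((pderiv ^^ m) f) [:1 + 1 / real k, -1 / real k:]))"
  unfolding hestenes_def higher_pderiv_sum higher_pderiv_smult higher_pderiv_pcompose_linear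
  by (simp add: smult_smult)

lemma hestenes_coeff_moments: "m \<le> 4 \<Longrightarrow> (\<Sum>k\<in>{1..5}. hestenes_coeff k * (-1 / real k) ^ m) = 1"
proof -
  assume "m \<le> 4"
  then have "m \<in> {0, 1, 2, 3, 4}" by auto
  moreover have "{1..5::nat} = {1, 2, 3, 4, 5}" by auto
  ultimately show ?thesis by (auto simp: hestenes_coeff_def power_divide)
qed

lemma flat_upto_hestenes: "flat_upto 4 (hestenes f - f) 1"
  unfolding flat_upto_def higher_pderiv_diff
proof (intro allI impI)
  fix m :: nat assume "m \<le> 4"
  have "poly ((pderiv ^^ m) (hestenes f)) 1 =
      (\<Sum>k\<in>{1..5}. hestenes_coeff k * (-1 / real k) ^ m) * poly ((pderiv ^^ m) f) 1"
    unfolding higher_pderiv_hestenes poly_sum poly_smult poly_pcompose sum_distrib_right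
    by (intro sum.cong) auto
  then show "poly ((pderiv ^^ m) (hestenes f) - (pderiv ^^ m) f) 1 = 0"
    using hestenes_coeff_moments[OF \<open>m \<le> 4\<close>] by simp
qed

lemma flat_upto_right_ext_1: "flat_upto 4 (right_ext f - f) 1"
proof -
  have "right_ext f - f = cutoff * (hestenes f - f) + (cutoff - 1) * f"
    unfolding right_ext_def by (simp add: algebra_simps)
  then show ?thesis
    using flat_upto_hestenes flat_upto_cutoff_1
    by (simp add: flat_upto_add flat_upto_mult_left flat_upto_mult_right)
qed

lemma flat_upto_right_ext_2: "flat_upto 4 (right_ext f) 2"
  unfolding right_ext_def by (rule flat_upto_mult_right[OF flat_upto_cutoff_2])

lemma higher_pderiv_right_ext_at_1:
  "m \<le> 4 \<Longrightarrow> poly ((pderiv ^^ m) (right_ext f)) 1 = poly ((pderiv ^^ m) f) 1"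
  using flat_upto_right_ext_1 by (simp add: flat_upto_def higher_pderiv_diff)

lemma higher_pderiv_right_ext_at_2: "m \<le> 4 \<Longrightarrow> poly ((pderiv ^^ m) (right_ext f)) 2 = 0"
  using flat_upto_right_ext_2 by (simp add: flat_upto_def)

lemma higher_pderiv_mirror: "(pderiv ^^ m) (mirror p) = smult ((-1) ^ m) (mirror ((pderiv ^^ m) p))"
  unfolding mirror_def by (rule higher_pderiv_pcompose_linear)

lemma poly_mirror [simp]: "poly (mirror p) x = poly p (-x)"
  by (simp add: mirror_def poly_pcompose)

lemma higher_pderiv_left_ext:
  "poly ((pderiv ^^ m) (left_ext f)) x = (-1) ^ m * poly ((pderiv ^^ m) (right_ext (mirror f))) (-x)"
  unfolding left_ext_def higher_pderiv_mirror by simp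

lemma higher_pderiv_left_ext_at_minus_1:
  "m \<le> 4 \<Longrightarrow> poly ((pderiv ^^ m) (left_ext f)) (-1) = poly ((pderiv ^^ m) f) (-1)"
  by (simp add: higher_pderiv_left_ext higher_pderiv_right_ext_at_1 higher_pderiv_mirror
      flip: power_mult_distrib)

lemma higher_pderiv_left_ext_at_minus_2: "m \<le> 4 \<Longrightarrow> poly ((pderiv ^^ m) (left_ext f)) (-2) = 0"
  by (simp add: higher_pderiv_left_ext higher_pderiv_right_ext_at_2)

lemma glue_compatible_ext:
  "m \<le> 4 \<Longrightarrow> glue_compatible ((pderiv ^^ m) (left_ext f)) ((pderiv ^^ m) f) ((pderiv ^^ m) (right_ext f))"
  by (simp add: glue_compatible_def higher_pderiv_left_ext_at_minus_1 higher_pderiv_left_ext_at_minus_2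
      higher_pderiv_right_ext_at_1 higher_pderiv_right_ext_at_2)

lemma has_real_derivative_ext1: "m < 4 \<Longrightarrow> (ext1 m f has_real_derivative ext1 (Suc m) f t) (at t)"
proof -
  assume "m < 4"
  then have "glue_compatible ((pderiv ^^ m) (left_ext f)) ((pderiv ^^ m) f) ((pderiv ^^ m) (right_ext f))"
    and "glue_compatible (pderiv ((pderiv ^^ m) (left_ext f))) (pderiv ((pderiv ^^ m) f))
      (pderiv ((pderiv ^^ m) (right_ext f)))"
    using glue_compatible_ext[of m f] glue_compatible_ext[of "Suc m" f] by simp_all
  from has_real_derivative_glue_poly[OF this] show ?thesis
    by (simp add: ext1_def)
qed

lemma continuous_on_ext1: "m \<le> 4 \<Longrightarrow> continuous_on UNIV (ext1 m f)"
  unfolding ext1_def by (rule continuous_on_glue_poly[OF glue_compatible_ext])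

lemma ext1_outside: "2 < \<bar>t\<bar> \<Longrightarrow> ext1 m f t = 0"
  unfolding ext1_def glue_poly_def by auto

lemma ext1_inside: "m \<le> 4 \<Longrightarrow> -1 \<le> t \<Longrightarrow> t \<le> 1 \<Longrightarrow> ext1 m f t = poly ((pderiv ^^ m) f) t"
  unfolding ext1_def glue_poly_def using higher_pderiv_left_ext_at_minus_1[of m f] by auto

lemma ext1_on_right: "m \<le> 4 \<Longrightarrow> 1 \<le> t \<Longrightarrow> t \<le> 2 \<Longrightarrow> ext1 m f t = poly ((pderiv ^^ m) (right_ext f)) t"
  unfolding ext1_def glue_poly_def using higher_pderiv_right_ext_at_1[of m f] by auto

lemma ext1_on_left:
  "m \<le> 4 \<Longrightarrow> -2 \<le> t \<Longrightarrow> t \<le> -1 \<Longrightarrow>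
     ext1 m f t = (-1) ^ m * poly ((pderiv ^^ m) (right_ext (mirror f))) (-t)"
  unfolding ext1_def glue_poly_def using higher_pderiv_left_ext_at_minus_2[of m f]
  by (auto simp: higher_pderiv_left_ext)

lemma hestenes_linear: "hestenes (\<Sum>j\<in>A. smult (b j) (f j)) = (\<Sum>j\<in>A. smult (b j) (hestenes (f j)))"
proof -
  have "poly (hestenes (\<Sum>j\<in>A. smult (b j) (f j))) x = poly (\<Sum>j\<in>A. smult (b j) (hestenes (f j))) x"
    for x
    by (simp add: hestenes_def poly_sum poly_pcompose sum_distrib_left algebra_simps sum.swap[of _ A])
  then show ?thesis by (simp add: poly_eq_poly_eq_iff[symmetric] fun_eq_iff)
qed

lemma right_ext_linear: "right_ext (\<Sum>j\<in>A. smult (b j) (f j)) = (\<Sum>j\<in>A. smult (b j) (right_ext (f j)))"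
  by (simp add: right_ext_def hestenes_linear sum_distrib_left mult_smult_right)

lemma mirror_linear: "mirror (\<Sum>j\<in>A. smult (b j) (f j)) = (\<Sum>j\<in>A. smult (b j) (mirror (f j)))"
  by (simp add: mirror_def pcompose_sum pcompose_smult)

lemma ext1_linear: "ext1 m (\<Sum>j\<in>A. smult (b j) (f j)) t = (\<Sum>j\<in>A. b j * ext1 m (f j) t)"
  unfolding ext1_def glue_poly_def left_ext_def mirror_linear right_ext_linear
    higher_pderiv_sum higher_pderiv_smult
  by (simp add: poly_sum)

section \<open>\<open>L\<^sup>2\<close> estimates in one variable\<close>

definition sq_integral :: "real \<Rightarrow> real \<Rightarrow> real poly \<Rightarrow> real" where
  "sq_integral a b p = integral {a..b} (\<lambda>t. (poly p t)\<^sup>2)"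

text \<open>Only the derivatives of order 0, 2 and 4 enter, as on the right-hand side of the theorem.\<close>

definition even_energy :: "real \<Rightarrow> real \<Rightarrow> real poly \<Rightarrow> real" where
  "even_energy a b f = sq_integral a b f + sq_integral a b ((pderiv ^^ 2) f) + sq_integral a b ((pderiv ^^ 4) f)"

lemma sq_integral_nonneg: "0 \<le> sq_integral a b p"
  unfolding sq_integral_def by (intro integral_nonneg integrable_continuous_real continuous_intros) auto

lemma even_energy_nonneg: "0 \<le> even_energy a b f"
  by (simp add: even_energy_def sq_integral_nonneg)

lemma sq_integral_le_even_energy: "j \<in> {0, 2, 4} \<Longrightarrow> sq_integral a b ((pderiv ^^ j) f) \<le> even_energy a b f"
  using sq_integral_nonneg[of a b] by (auto simp: even_energy_def)

lemma integral_poly_pderiv: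
  fixes a b :: real
  assumes "a \<le> b"
  shows "integral {a..b} (poly (pderiv p)) = poly p b - poly p a"
proof -
  have "(poly (pderiv p) has_integral (poly p b - poly p a)) {a..b}"
    by (rule fundamental_theorem_of_calculus[OF assms])
       (auto simp: has_real_derivative_iff_has_vector_derivative[symmetric]
         intro: has_field_derivative_at_within poly_DERIV)
  then show ?thesis by (rule integral_unique)
qed

lemma weighted_interpolation:
  fixes w h :: "real poly"
  assumes "a \<le> b" and "flat_upto 1 w a" "flat_upto 1 w b"
    and bound_w: "\<And>t. t \<in> {a..b} \<Longrightarrow> \<bar>poly w t\<bar> \<le> M"
    and bound_w'': "\<And>t. t \<in> {a..b} \<Longrightarrow> \<bar>poly (pderiv (pderiv w)) t\<bar> \<le> M"
  shows "integral {a..b} (\<lambda>t. poly w t * (poly (pderiv h) t)\<^sup>2)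
    \<le> M * (sq_integral a b h + sq_integral a b (pderiv (pderiv h)))"
proof -
  define A where "A t = poly w t * (poly (pderiv h) t)\<^sup>2" for t
  define B where "B t = poly w t * poly h t * poly (pderiv (pderiv h)) t" for t
  define C where "C t = poly (pderiv (pderiv w)) t * (poly h t)\<^sup>2 / 2" for t
  note integrable = integrable_continuous_real[OF continuous_on_subset[OF _ subset_UNIV]]
  have iA: "A integrable_on {a..b}" and iB: "B integrable_on {a..b}" and iC: "C integrable_on {a..b}"
    unfolding A_def B_def C_def by (intro integrable continuous_intros; simp)+
  \<comment> \<open>Integration by parts: \<open>(w h h' - w' h\<^sup>2 / 2)' = w h'\<^sup>2 + w h h'' - w'' h\<^sup>2 / 2\<close>,
    and the boundary terms vanish because \<open>w\<close> and \<open>w'\<close> do.\<close>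
  define F where "F = w * h * pderiv h - smult (1/2) (pderiv w * h\<^sup>2)"
  have "poly (pderiv F) = (\<lambda>t. A t + B t - C t)"
    unfolding F_def A_def B_def C_def
    by (simp add: fun_eq_iff pderiv_mult pderiv_diff pderiv_smult power2_eq_square algebra_simps)
  moreover have "integral {a..b} (poly (pderiv F)) = 0"
    using assms(1-3) by (simp add: integral_poly_pderiv F_def flat_upto_Suc)
  ultimately have "integral {a..b} A = integral {a..b} (\<lambda>t. C t - B t)"
    using iA iB iC by (simp add: integral_diff integral_add integrable_add)
  also have "\<dots> \<le> integral {a..b} (\<lambda>t. M * ((poly h t)\<^sup>2 + (poly (pderiv (pderiv h)) t)\<^sup>2))"
  proof (rule integral_le)
    show "(\<lambda>t. C t - B t) integrable_on {a..b}" using iB iC by (rule integrable_diff[rotated])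
    show "(\<lambda>t. M * ((poly h t)\<^sup>2 + (poly (pderiv (pderiv h)) t)\<^sup>2)) integrable_on {a..b}"
      by (intro integrable continuous_intros)
  next
    fix t assume t: "t \<in> {a..b}"
    define x y where "x = poly h t" and "y = poly (pderiv (pderiv h)) t"
    have "C t \<le> M * x\<^sup>2 / 2"
      using bound_w''[OF t] unfolding C_def x_def
      by (intro divide_right_mono mult_right_mono) auto
    moreover have "- B t \<le> M * ((x\<^sup>2 + y\<^sup>2) / 2)"
    proof -
      have "- B t \<le> \<bar>poly w t\<bar> * \<bar>x * y\<bar>"
        unfolding B_def x_def y_def by (simp add: abs_mult) (metis abs_ge_minus_self abs_mult mult.assoc)
      also have "\<dots> \<le> M * ((x\<^sup>2 + y\<^sup>2) / 2)"
        using bound_w[OF t] sum_squares_bound[of "\<bar>x\<bar>" "\<bar>y\<bar>"] bound_w[of a] assms(1)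
        by (intro mult_mono) (auto simp: abs_mult)
      finally show ?thesis .
    qed
    moreover have "0 \<le> M * y\<^sup>2" using bound_w[of a] assms(1) by auto
    ultimately show "C t - B t \<le> M * ((poly h t)\<^sup>2 + (poly (pderiv (pderiv h)) t)\<^sup>2)"
      unfolding x_def[symmetric] y_def[symmetric] by (simp add: algebra_simps)
  qed
  also have "\<dots> = M * (sq_integral a b h + sq_integral a b (pderiv (pderiv h)))"
    unfolding sq_integral_def
    by (subst integral_add[symmetric] integral_mult_right[symmetric];
        (intro integrable continuous_intros)?)+ simp
  finally show ?thesis unfolding A_def .
qed

lemma integral_hestenes_substitution_le:
  fixes g :: "real \<Rightarrow> real" and k :: real
  assumes "continuous_on UNIV g" and "\<And>x. 0 \<le> g x" and k: "1 \<le> k"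
  shows "integral {1..2} (\<lambda>t. g (1 + 1/k - t/k)) \<le> k * integral {-1..1} g"
proof -
  have integrable: "g integrable_on {a..b}" for a b
    by (intro integrable_continuous_real continuous_on_subset[OF assms(1)]) auto
  have "(g has_integral integral {1 - 1/k..1} g) (cbox (1 - 1/k) 1)"
    using integrable by (simp add: integrable_integral)
  from has_integral_affinity[OF this, of "-1/k" "1 + 1/k"] k
  have affine: "((\<lambda>x. g ((-1/k) *\<^sub>R x + (1 + 1/k))) has_integral (1 / \<bar>-1/k\<bar> ^ DIM(real)) *\<^sub>R integral {1 - 1/k..1} g)
     ((\<lambda>x. (1 / (-1/k)) *\<^sub>R x + -((1 / (-1/k)) *\<^sub>R (1 + 1/k))) ` cbox (1 - 1/k) 1)"
    by simp
  have integrand: "(\<lambda>x. g ((-1/k) *\<^sub>R x + (1 + 1/k))) = (\<lambda>t. g (1 + 1/k - t/k))"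
    by (simp add: fun_eq_iff field_simps)
  have "(\<lambda>x. (1 / (-1/k)) *\<^sub>R x + -((1 / (-1/k)) *\<^sub>R (1 + 1/k))) = (\<lambda>x. (-k) * x + (k + 1))"
    using k by (simp add: fun_eq_iff field_simps)
  then have domain: "(\<lambda>x. (1 / (-1/k)) *\<^sub>R x + -((1 / (-1/k)) *\<^sub>R (1 + 1/k))) ` cbox (1 - 1/k) 1 = {1..2}"
    unfolding cbox_interval using k
    by (simp only:) (subst image_affinity_atLeastAtMost; auto simp: field_simps)
  have factor: "(1 / \<bar>-1/k\<bar> ^ DIM(real)) *\<^sub>R integral {1 - 1/k..1} g = k * integral {1 - 1/k..1} g"
    using k by simp
  have "((\<lambda>t. g (1 + 1/k - t/k)) has_integral k * integral {1 - 1/k..1} g) {1..2}"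
    using affine unfolding integrand domain factor .
  then have "integral {1..2} (\<lambda>t. g (1 + 1/k - t/k)) = k * integral {1 - 1/k..1} g"
    by (rule integral_unique)
  also have "\<dots> \<le> k * integral {-1..1} g"
    using assms(2) k by (intro mult_left_mono integral_subset_le integrable) (auto simp: divide_le_eq)
  finally show ?thesis .
qed

lemma square_sum_le_card_sum_squares:
  fixes x :: "'a \<Rightarrow> real"
  shows "(\<Sum>i\<in>A. x i)\<^sup>2 \<le> real (card A) * (\<Sum>i\<in>A. (x i)\<^sup>2)"
  using Cauchy_Schwarz_ineq_sum[of x "\<lambda>_. 1" A] by (simp add: mult.commute)

definition hestenes_const :: real where
  "hestenes_const = 5 * (\<Sum>k\<in>{1..5}. (hestenes_coeff k)\<^sup>2 * real k)"

lemma hestenes_const_nonneg: "0 \<le> hestenes_const"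
  unfolding hestenes_const_def by (intro mult_nonneg_nonneg sum_nonneg) auto

lemma square_higher_pderiv_hestenes_le:
  "(poly ((pderiv ^^ j) (hestenes f)) t)\<^sup>2
    \<le> 5 * (\<Sum>k\<in>{1..5}. (hestenes_coeff k)\<^sup>2 * (poly ((pderiv ^^ j) f) (1 + 1 / real k - t / real k))\<^sup>2)"
proof -
  define x where "x k = poly ((pderiv ^^ j) f) (1 + 1 / real k - t / real k)" for k
  have "(poly ((pderiv ^^ j) (hestenes f)) t)\<^sup>2 = (\<Sum>k\<in>{1..5}. hestenes_coeff k * (-1 / real k) ^ j * x k)\<^sup>2"
    unfolding higher_pderiv_hestenes poly_sum poly_smult poly_pcompose x_def by simp
  also have "\<dots> \<le> 5 * (\<Sum>k\<in>{1..5}. (hestenes_coeff k * (-1 / real k) ^ j * x k)\<^sup>2)"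
    by (rule order_trans[OF square_sum_le_card_sum_squares]) simp
  also have "\<dots> \<le> 5 * (\<Sum>k\<in>{1..5}. (hestenes_coeff k)\<^sup>2 * (x k)\<^sup>2)"
  proof (intro mult_left_mono sum_mono)
    fix k :: nat assume "k \<in> {1..5}"
    then have "((-1 / real k) ^ j)\<^sup>2 \<le> 1"
      by (simp add: power_le_one abs_square_le_1 power_abs)
    then show "(hestenes_coeff k * (-1 / real k) ^ j * x k)\<^sup>2 \<le> (hestenes_coeff k)\<^sup>2 * (x k)\<^sup>2"
      unfolding power_mult_distrib by (intro mult_right_mono) (auto intro: mult_left_le)
  qed simp
  finally show ?thesis unfolding x_def .
qed

lemma sq_integral_hestenes:
  "sq_integral 1 2 ((pderiv ^^ j) (hestenes f)) \<le> hestenes_const * sq_integral (-1) 1 ((pderiv ^^ j) f)"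
proof -
  define p where "p = (pderiv ^^ j) f"
  define y where "y k t = (hestenes_coeff k)\<^sup>2 * (poly p (1 + 1 / real k - t / real k))\<^sup>2" for k t
  have y_integrable: "(y k) integrable_on {1..2}" if "k \<in> {1..5}" for k
    using that unfolding y_def by (intro integrable_continuous_real continuous_intros) auto
  have "sq_integral 1 2 ((pderiv ^^ j) (hestenes f)) \<le> integral {1..2} (\<lambda>t. 5 * (\<Sum>k\<in>{1..5}. y k t))"
    unfolding sq_integral_def
  proof (rule integral_le)
    show "(\<lambda>t. (poly ((pderiv ^^ j) (hestenes f)) t)\<^sup>2) integrable_on {1..2}"
      by (intro integrable_continuous_real continuous_intros)
    show "(\<lambda>t. 5 * (\<Sum>k\<in>{1..5}. y k t)) integrable_on {1..2}"
      using y_integrable by (auto intro!: integrable_sum)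
  qed (unfold y_def p_def, rule square_higher_pderiv_hestenes_le)
  also have "\<dots> = 5 * (\<Sum>k\<in>{1..5}. integral {1..2} (y k))"
    using integral_sum[of "{1..5}" y "{1..2}"] y_integrable by simp
  also have "\<dots> \<le> 5 * (\<Sum>k\<in>{1..5}. (hestenes_coeff k)\<^sup>2 * (real k * sq_integral (-1) 1 p))"
  proof (intro mult_left_mono sum_mono)
    fix k :: nat assume "k \<in> {1..5}"
    then have "integral {1..2} (\<lambda>t. (poly p (1 + 1 / real k - t / real k))\<^sup>2) \<le> real k * sq_integral (-1) 1 p"
      unfolding sq_integral_def by (intro integral_hestenes_substitution_le) (auto intro!: continuous_intros)
    then show "integral {1..2} (y k) \<le> (hestenes_coeff k)\<^sup>2 * (real k * sq_integral (-1) 1 p)"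
      unfolding y_def by (simp add: mult_left_mono)
  qed simp
  also have "\<dots> = hestenes_const * sq_integral (-1) 1 p"
    by (simp add: hestenes_const_def sum_distrib_left sum_distrib_right mult_ac)
  finally show ?thesis unfolding p_def .
qed

lemma even_energy_hestenes: "even_energy 1 2 (hestenes f) \<le> hestenes_const * even_energy (-1) 1 f"
  using sq_integral_hestenes[of 0 f] sq_integral_hestenes[of 2 f] sq_integral_hestenes[of 4 f]
  by (simp add: even_energy_def distrib_left)

lemma cutoff_derivs_bounded:
  obtains B where "\<And>i t. i \<le> 6 \<Longrightarrow> t \<in> {1..2} \<Longrightarrow> \<bar>poly ((pderiv ^^ i) cutoff) t\<bar> \<le> B"
proof -
  define h where "h t = (\<Sum>i\<le>6. \<bar>poly ((pderiv ^^ i) cutoff) t\<bar>)" for t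
  have "continuous_on {1..2} h" unfolding h_def by (intro continuous_intros)
  from continuous_attains_sup[OF compact_Icc _ this]
  obtain x where "\<forall>t\<in>{1..2}. h t \<le> h x" by auto
  moreover have "\<bar>poly ((pderiv ^^ i) cutoff) t\<bar> \<le> h t" if "i \<le> 6" for i t
    unfolding h_def using that by (intro member_le_sum) auto
  ultimately show ?thesis using that by (meson order_trans)
qed

lemma integral_cutoff_product_le:
  assumes B: "\<And>t. t \<in> {1..2} \<Longrightarrow> \<bar>poly ((pderiv ^^ i) cutoff) t\<bar> \<le> B"
  shows "integral {1..2} (\<lambda>t. (poly ((pderiv ^^ i) cutoff) t * poly g t)\<^sup>2) \<le> B\<^sup>2 * sq_integral 1 2 g"
proof -
  have "integral {1..2} (\<lambda>t. (poly ((pderiv ^^ i) cutoff) t * poly g t)\<^sup>2)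
      \<le> integral {1..2} (\<lambda>t. B\<^sup>2 * (poly g t)\<^sup>2)"
  proof (rule integral_le)
    fix t :: real assume "t \<in> {1..2}"
    then have "\<bar>poly ((pderiv ^^ i) cutoff) t\<bar>\<^sup>2 \<le> B\<^sup>2"
      using B by (intro power_mono) auto
    then show "(poly ((pderiv ^^ i) cutoff) t * poly g t)\<^sup>2 \<le> B\<^sup>2 * (poly g t)\<^sup>2"
      unfolding power_mult_distrib power2_abs by (rule mult_right_mono) simp
  next
    show "(\<lambda>t. (poly ((pderiv ^^ i) cutoff) t * poly g t)\<^sup>2) integrable_on {1..2}"
      by (intro integrable_continuous_real continuous_intros)
    show "(\<lambda>t. B\<^sup>2 * (poly g t)\<^sup>2) integrable_on {1..2}"
      by (intro integrable_continuous_real continuous_intros)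
  qed
  also have "\<dots> = B\<^sup>2 * sq_integral 1 2 g"
    unfolding sq_integral_def by (intro integral_mult[symmetric] integrable_continuous_real continuous_intros)
  finally show ?thesis .
qed

lemma abs_poly_square_le:
  fixes p :: "real poly"
  assumes "\<bar>poly p t\<bar> \<le> B" "\<bar>poly (pderiv p) t\<bar> \<le> B" "\<bar>poly (pderiv (pderiv p)) t\<bar> \<le> B"
  shows "\<bar>poly (p * p) t\<bar> \<le> 4 * B\<^sup>2" and "\<bar>poly (pderiv (pderiv (p * p))) t\<bar> \<le> 4 * B\<^sup>2"
proof -
  have "\<bar>poly (p * p) t\<bar> = \<bar>poly p t\<bar>\<^sup>2" by (simp add: abs_mult power2_eq_square)
  also have "\<dots> \<le> B\<^sup>2" using assms(1) by (intro power_mono) auto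
  finally show "\<bar>poly (p * p) t\<bar> \<le> 4 * B\<^sup>2"
    using zero_le_power2[of B] by linarith
  have "poly (pderiv (pderiv (p * p))) t
      = 2 * (poly (pderiv p) t * poly (pderiv p) t + poly p t * poly (pderiv (pderiv p)) t)"
    by (simp add: pderiv_mult pderiv_add algebra_simps)
  then have "\<bar>poly (pderiv (pderiv (p * p))) t\<bar>
      = 2 * \<bar>poly (pderiv p) t * poly (pderiv p) t + poly p t * poly (pderiv (pderiv p)) t\<bar>"
    by (simp only: abs_mult abs_numeral)
  also have "\<dots> \<le> 2 * (\<bar>poly (pderiv p) t\<bar> * \<bar>poly (pderiv p) t\<bar> + \<bar>poly p t\<bar> * \<bar>poly (pderiv (pderiv p)) t\<bar>)"
    using abs_triangle_ineq[of "poly (pderiv p) t * poly (pderiv p) t" "poly p t * poly (pderiv (pderiv p)) t"]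
    by (simp only: abs_mult) simp
  also have "\<dots> \<le> 2 * (B * B + B * B)"
    using assms by (intro mult_left_mono add_mono mult_mono) auto
  finally show "\<bar>poly (pderiv (pderiv (p * p))) t\<bar> \<le> 4 * B\<^sup>2" by (simp add: power2_eq_square)
qed

lemma integral_cutoff_product_odd_le:
  assumes B: "\<And>i t. i \<le> 6 \<Longrightarrow> t \<in> {1..2} \<Longrightarrow> \<bar>poly ((pderiv ^^ i) cutoff) t\<bar> \<le> B"
    and i: "1 \<le> i" "i \<le> 4" and j: "j = 1 \<or> j = 3"
  shows "integral {1..2} (\<lambda>t. (poly ((pderiv ^^ i) cutoff) t * poly ((pderiv ^^ j) h) t)\<^sup>2)
    \<le> 4 * B\<^sup>2 * even_energy 1 2 h"
proof -
  define p where "p = (pderiv ^^ i) cutoff"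
  define g where "g = (pderiv ^^ (j - 1)) h"
  have p_bounds: "\<bar>poly p t\<bar> \<le> B" "\<bar>poly (pderiv p) t\<bar> \<le> B" "\<bar>poly (pderiv (pderiv p)) t\<bar> \<le> B"
    if "t \<in> {1..2}" for t
    using B[OF _ that, of i] B[OF _ that, of "Suc i"] B[OF _ that, of "Suc (Suc i)"] i
    by (simp_all add: p_def)
  have g': "pderiv g = (pderiv ^^ j) h"
    using j by (auto simp: g_def numeral_eq_Suc)
  have "integral {1..2} (\<lambda>t. (poly p t * poly ((pderiv ^^ j) h) t)\<^sup>2)
      = integral {1..2} (\<lambda>t. poly (p * p) t * (poly (pderiv g) t)\<^sup>2)"
    by (simp add: g' power_mult_distrib power2_eq_square mult_ac)
  also have "\<dots> \<le> 4 * B\<^sup>2 * (sq_integral 1 2 g + sq_integral 1 2 (pderiv (pderiv g)))"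
  proof (rule weighted_interpolation)
    show "flat_upto 1 (p * p) 1" "flat_upto 1 (p * p) 2"
      unfolding p_def by (intro flat_upto_1_square poly_higher_pderiv_cutoff_eq_0[OF i]; simp)+
  qed (use abs_poly_square_le[OF p_bounds] in auto)
  also have "\<dots> \<le> 4 * B\<^sup>2 * even_energy 1 2 h"
    using j sq_integral_nonneg[of 1 2] by (intro mult_left_mono) (auto simp: g_def even_energy_def numeral_eq_Suc)
  finally show ?thesis unfolding p_def .
qed

lemma square_higher_pderiv_mult_le:
  fixes p h :: "real poly"
  assumes "m \<le> 4"
  shows "(poly ((pderiv ^^ m) (p * h)) t)\<^sup>2
    \<le> 1280 * (\<Sum>i\<le>m. (poly ((pderiv ^^ i) p) t * poly ((pderiv ^^ (m - i)) h) t)\<^sup>2)"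
proof -
  define x where "x i = poly ((pderiv ^^ i) p) t * poly ((pderiv ^^ (m - i)) h) t" for i
  have "(poly ((pderiv ^^ m) (p * h)) t)\<^sup>2 = (\<Sum>i\<le>m. real (m choose i) * x i)\<^sup>2"
    by (simp add: higher_pderiv_mult poly_sum x_def mult.assoc)
  also have "\<dots> \<le> real (card {..m}) * (\<Sum>i\<le>m. (real (m choose i) * x i)\<^sup>2)"
    by (rule square_sum_le_card_sum_squares)
  also have "\<dots> \<le> 5 * (\<Sum>i\<le>m. 256 * (x i)\<^sup>2)"
  proof (rule mult_mono)
    show "real (card {..m}) \<le> 5" using assms by auto
    show "(\<Sum>i\<le>m. (real (m choose i) * x i)\<^sup>2) \<le> (\<Sum>i\<le>m. 256 * (x i)\<^sup>2)"
    proof (rule sum_mono)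
      fix i
      have "m choose i \<le> 2 ^ 4"
        using binomial_le_pow2[of m i] power_increasing[of m 4 "2::nat"] assms by auto
      then have "(real (m choose i))\<^sup>2 \<le> 16\<^sup>2"
        by (intro power_mono) auto
      then show "(real (m choose i) * x i)\<^sup>2 \<le> 256 * (x i)\<^sup>2"
        unfolding power_mult_distrib by (intro mult_right_mono) simp_all
    qed
  qed (auto intro: sum_nonneg)
  finally show ?thesis by (simp add: sum_distrib_left x_def)
qed

text \<open>In the Leibniz expansion of \<open>(cutoff * h)\<^sup>(\<^sup>m\<^sup>)\<close> for even \<open>m\<close>, every odd derivative of \<open>h\<close>
  is paired with a derivative of the cutoff of order at least one, which vanishes at both ends of
  \<open>[1, 2]\<close>; this is what allows the interpolation inequality.\<close>

lemma integral_cutoff_leibniz_term_le: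
  assumes B: "\<And>i t. i \<le> 6 \<Longrightarrow> t \<in> {1..2} \<Longrightarrow> \<bar>poly ((pderiv ^^ i) cutoff) t\<bar> \<le> B"
    and m: "m \<in> {0, 2, 4}" and i: "i \<le> m"
  shows "integral {1..2} (\<lambda>t. (poly ((pderiv ^^ i) cutoff) t * poly ((pderiv ^^ (m - i)) h) t)\<^sup>2)
    \<le> 4 * B\<^sup>2 * even_energy 1 2 h"
proof -
  have cases: "m = 0 \<or> m = 2 \<or> m = 4" "i = 0 \<or> i = 1 \<or> i = 2 \<or> i = 3 \<or> i = 4"
    using m i by auto
  show ?thesis
  proof (cases "odd (m - i)")
    case True
    with cases have "1 \<le> i \<and> i \<le> 4 \<and> (m - i = 1 \<or> m - i = 3)"
      by (elim disjE) simp_all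
    then show ?thesis
      by (intro integral_cutoff_product_odd_le[OF B]) auto
  next
    case False
    with cases have "m - i \<in> {0, 2, 4}"
      by (elim disjE) simp_all
    then have energy: "sq_integral 1 2 ((pderiv ^^ (m - i)) h) \<le> even_energy 1 2 h"
      by (rule sq_integral_le_even_energy)
    have "integral {1..2} (\<lambda>t. (poly ((pderiv ^^ i) cutoff) t * poly ((pderiv ^^ (m - i)) h) t)\<^sup>2)
        \<le> B\<^sup>2 * sq_integral 1 2 ((pderiv ^^ (m - i)) h)"
      using m i by (intro integral_cutoff_product_le B) auto
    also have "\<dots> \<le> B\<^sup>2 * even_energy 1 2 h"
      using energy by (rule mult_left_mono) simp
    also have "\<dots> \<le> 4 * B\<^sup>2 * even_energy 1 2 h"
      by (intro mult_right_mono even_energy_nonneg) simp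
    finally show ?thesis .
  qed
qed

lemma sq_integral_higher_pderiv_cutoff_mult:
  assumes B: "\<And>i t. i \<le> 6 \<Longrightarrow> t \<in> {1..2} \<Longrightarrow> \<bar>poly ((pderiv ^^ i) cutoff) t\<bar> \<le> B"
    and m: "m \<in> {0, 2, 4}"
  shows "sq_integral 1 2 ((pderiv ^^ m) (cutoff * h)) \<le> 25600 * B\<^sup>2 * even_energy 1 2 h"
proof -
  define x where "x i t = poly ((pderiv ^^ i) cutoff) t * poly ((pderiv ^^ (m - i)) h) t" for i t
  have x_integrable: "(\<lambda>t. (x i t)\<^sup>2) integrable_on {1..2}" for i
    unfolding x_def by (intro integrable_continuous_real continuous_intros)
  have "sq_integral 1 2 ((pderiv ^^ m) (cutoff * h)) \<le> integral {1..2} (\<lambda>t. 1280 * (\<Sum>i\<le>m. (x i t)\<^sup>2))"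
    unfolding sq_integral_def
  proof (rule integral_le)
    show "(\<lambda>t. (poly ((pderiv ^^ m) (cutoff * h)) t)\<^sup>2) integrable_on {1..2}"
      by (intro integrable_continuous_real continuous_intros)
    show "(\<lambda>t. 1280 * (\<Sum>i\<le>m. (x i t)\<^sup>2)) integrable_on {1..2}"
      using x_integrable by (auto intro!: integrable_sum)
  qed (use m in \<open>auto simp: x_def intro: square_higher_pderiv_mult_le\<close>)
  also have "\<dots> = 1280 * (\<Sum>i\<le>m. integral {1..2} (\<lambda>t. (x i t)\<^sup>2))"
    using integral_sum[of "{..m}" "\<lambda>i t. (x i t)\<^sup>2" "{1..2}"] x_integrable by simp
  also have "\<dots> \<le> 1280 * (\<Sum>i\<le>m. 4 * B\<^sup>2 * even_energy 1 2 h)"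
    unfolding x_def using integral_cutoff_leibniz_term_le[OF B m] by (intro mult_left_mono sum_mono) auto
  also have "\<dots> \<le> 1280 * (5 * (4 * B\<^sup>2 * even_energy 1 2 h))"
    using m even_energy_nonneg[of 1 2 h] by (intro mult_left_mono) auto
  finally show ?thesis by simp
qed

lemma right_ext_sq_integral_bounds:
  obtains C where "0 \<le> C"
    and "\<And>f. sq_integral 1 2 (right_ext f) \<le> C * sq_integral (-1) 1 f"
    and "\<And>f m. m \<in> {0, 2, 4} \<Longrightarrow> sq_integral 1 2 ((pderiv ^^ m) (right_ext f)) \<le> C * even_energy (-1) 1 f"
proof -
  obtain B where B: "\<And>i t. i \<le> 6 \<Longrightarrow> t \<in> {1..2} \<Longrightarrow> \<bar>poly ((pderiv ^^ i) cutoff) t\<bar> \<le> B"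
    using cutoff_derivs_bounded by blast
  define C where "C = 25600 * B\<^sup>2 * hestenes_const"
  show ?thesis
  proof (rule that)
    show "0 \<le> C" using hestenes_const_nonneg by (simp add: C_def)
  next
    fix f
    have "sq_integral 1 2 (right_ext f) \<le> B\<^sup>2 * sq_integral 1 2 (hestenes f)"
      using integral_cutoff_product_le[of 0 B "hestenes f"] B[of 0]
      by (simp add: sq_integral_def right_ext_def)
    also have "\<dots> \<le> B\<^sup>2 * (hestenes_const * sq_integral (-1) 1 f)"
      using sq_integral_hestenes[of 0 f] by (intro mult_left_mono) simp_all
    also have "\<dots> \<le> C * sq_integral (-1) 1 f"
      using mult_nonneg_nonneg[OF zero_le_power2[of B]
          mult_nonneg_nonneg[OF hestenes_const_nonneg sq_integral_nonneg[of "-1" 1 f]]]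
      by (simp add: C_def mult_ac)
    finally show "sq_integral 1 2 (right_ext f) \<le> C * sq_integral (-1) 1 f" .
  next
    fix f and m :: nat assume m: "m \<in> {0, 2, 4}"
    have "sq_integral 1 2 ((pderiv ^^ m) (right_ext f)) \<le> 25600 * B\<^sup>2 * even_energy 1 2 (hestenes f)"
      unfolding right_ext_def by (rule sq_integral_higher_pderiv_cutoff_mult[OF B m])
    also have "\<dots> \<le> 25600 * B\<^sup>2 * (hestenes_const * even_energy (-1) 1 f)"
      by (intro mult_left_mono even_energy_hestenes) simp
    finally show "sq_integral 1 2 ((pderiv ^^ m) (right_ext f)) \<le> C * even_energy (-1) 1 f"
      by (simp add: C_def mult_ac)
  qed
qed

lemma neg_one_power_mult_square: "((-1) ^ j * y)\<^sup>2 = (y :: 'a::comm_ring_1)\<^sup>2"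
  by (cases "even j") simp_all

lemma sq_integral_higher_pderiv_mirror:
  "sq_integral (-1) 1 ((pderiv ^^ j) (mirror f)) = sq_integral (-1) 1 ((pderiv ^^ j) f)"
proof -
  have "sq_integral (-1) 1 ((pderiv ^^ j) (mirror f)) = integral {-1..1} (\<lambda>x. (poly ((pderiv ^^ j) f) (-x))\<^sup>2)"
    unfolding sq_integral_def higher_pderiv_mirror by (simp add: neg_one_power_mult_square)
  also have "\<dots> = integral {-1..-(-1)} (\<lambda>x. (\<lambda>y. (poly ((pderiv ^^ j) f) y)\<^sup>2) (-x))"
    by simp
  also have "\<dots> = sq_integral (-1) 1 ((pderiv ^^ j) f)"
    unfolding sq_integral_def by (rule Henstock_Kurzweil_Integration.integral_reflect_real)
  finally show ?thesis .
qed

lemma even_energy_mirror: "even_energy (-1) 1 (mirror f) = even_energy (-1) 1 f"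
  using sq_integral_higher_pderiv_mirror[of 0 f] sq_integral_higher_pderiv_mirror[of 2 f]
    sq_integral_higher_pderiv_mirror[of 4 f]
  by (simp add: even_energy_def)

lemma integral_ext1_square:
  assumes m: "m \<le> 4"
  shows "integral {-2..2} (\<lambda>t. (ext1 m f t)\<^sup>2) =
    sq_integral 1 2 ((pderiv ^^ m) (right_ext (mirror f))) + sq_integral (-1) 1 ((pderiv ^^ m) f)
    + sq_integral 1 2 ((pderiv ^^ m) (right_ext f))"
proof -
  have "continuous_on UNIV (\<lambda>t. (ext1 m f t)\<^sup>2)"
    using continuous_on_ext1[OF m] by (intro continuous_intros)
  then have integrable: "(\<lambda>t. (ext1 m f t)\<^sup>2) integrable_on {a..b}" for a b
    by (intro integrable_continuous_real continuous_on_subset[OF \<open>continuous_on UNIV _\<close>]) auto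
  have "integral {-2..2} (\<lambda>t. (ext1 m f t)\<^sup>2) = integral {-2..-1} (\<lambda>t. (ext1 m f t)\<^sup>2)
      + integral {-1..2} (\<lambda>t. (ext1 m f t)\<^sup>2)"
    by (rule Henstock_Kurzweil_Integration.integral_combine[symmetric]) (auto intro: integrable)
  also have "integral {-1..2} (\<lambda>t. (ext1 m f t)\<^sup>2) = integral {-1..1} (\<lambda>t. (ext1 m f t)\<^sup>2)
      + integral {1..2} (\<lambda>t. (ext1 m f t)\<^sup>2)"
    by (rule Henstock_Kurzweil_Integration.integral_combine[symmetric]) (auto intro: integrable)
  also have "integral {-2..-1} (\<lambda>t. (ext1 m f t)\<^sup>2)
      = integral {-2..-1} (\<lambda>t. (poly ((pderiv ^^ m) (right_ext (mirror f))) (-t))\<^sup>2)"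
    using m by (intro integral_cong) (simp add: ext1_on_left neg_one_power_mult_square)
  also have "\<dots> = sq_integral 1 2 ((pderiv ^^ m) (right_ext (mirror f)))"
    unfolding sq_integral_def by (rule Henstock_Kurzweil_Integration.integral_reflect_real)
  also have "integral {-1..1} (\<lambda>t. (ext1 m f t)\<^sup>2) = sq_integral (-1) 1 ((pderiv ^^ m) f)"
    unfolding sq_integral_def using m by (intro integral_cong) (simp add: ext1_inside)
  also have "integral {1..2} (\<lambda>t. (ext1 m f t)\<^sup>2) = sq_integral 1 2 ((pderiv ^^ m) (right_ext f))"
    unfolding sq_integral_def using m by (intro integral_cong) (simp add: ext1_on_right)
  finally show ?thesis by (simp only: add.assoc)
qed

lemma integral_lborel_eq_integral_Icc:
  fixes h :: "real \<Rightarrow> real"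
  assumes "continuous_on UNIV h" and "\<And>t. R < \<bar>t\<bar> \<Longrightarrow> h t = 0"
  shows "(\<integral>x. h x \<partial>lborel) = integral {-R..R} h"
proof -
  have "set_integrable lborel {-R..R} h"
    unfolding set_integrable_def
    by (rule borel_integrable_compact) (auto intro: continuous_on_subset[OF assms(1)])
  moreover have "(\<integral>x. h x \<partial>lborel) = (LINT x:{-R..R}|lborel. h x)"
    unfolding set_lebesgue_integral_def
  proof (intro Bochner_Integration.integral_cong refl)
    fix x show "h x = indicator {-R..R} x *\<^sub>R h x"
      using assms(2)[of x] by (cases "x \<in> {-R..R}") (auto simp: abs_if)
  qed
  ultimately show ?thesis by (simp add: set_borel_integral_eq_integral(2))
qed

lemma set_integral_Ioo_eq_integral_Icc:
  fixes h :: "real \<Rightarrow> real"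
  assumes "continuous_on UNIV h"
  shows "(LINT x:{a<..<b}|lborel. h x) = integral {a..b} h"
proof -
  have "set_integrable lborel {a..b} h"
    unfolding set_integrable_def
    by (rule borel_integrable_compact) (auto intro: continuous_on_subset[OF assms])
  then have "set_integrable lborel {a<..<b} h" by (rule set_integrable_subset) auto
  then show ?thesis by (simp add: set_borel_integral_eq_integral(2) integral_open_interval_real)
qed

lemma integral_lborel_ext1_square: "m \<le> 4 \<Longrightarrow> (\<integral>t. (ext1 m f t)\<^sup>2 \<partial>lborel) = integral {-2..2} (\<lambda>t. (ext1 m f t)\<^sup>2)"
  by (rule integral_lborel_eq_integral_Icc) (auto intro!: continuous_intros continuous_on_ext1 simp: ext1_outside)

lemma sq_integral_eq_set_integral: "sq_integral (-1) 1 f = (LINT x:{-1<..<1}|lborel. (poly f x)\<^sup>2)"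
  unfolding sq_integral_def by (rule set_integral_Ioo_eq_integral_Icc[symmetric]) (intro continuous_intros)

lemma even_energy_eq_set_integral:
  "even_energy (-1) 1 f =
    (LINT x:{-1<..<1}|lborel. (poly f x)\<^sup>2 + (poly ((pderiv ^^ 2) f) x)\<^sup>2 + (poly ((pderiv ^^ 4) f) x)\<^sup>2)"
proof -
  have integrable: "(\<lambda>x. (poly p x)\<^sup>2) integrable_on {-1..1}" for p :: "real poly"
    by (intro integrable_continuous_real continuous_intros)
  have "(LINT x:{-1<..<1}|lborel. (poly f x)\<^sup>2 + (poly ((pderiv ^^ 2) f) x)\<^sup>2 + (poly ((pderiv ^^ 4) f) x)\<^sup>2)
      = integral {-1..1} (\<lambda>x. (poly f x)\<^sup>2 + (poly ((pderiv ^^ 2) f) x)\<^sup>2 + (poly ((pderiv ^^ 4) f) x)\<^sup>2)"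
    by (rule set_integral_Ioo_eq_integral_Icc) (intro continuous_intros)
  then show ?thesis
    unfolding even_energy_def sq_integral_def by (simp add: integral_add integrable integrable_add)
qed

lemma ext1_sq_integral_bounds:
  obtains C where "0 \<le> C"
    and "\<And>f. (\<integral>t. (ext1 0 f t)\<^sup>2 \<partial>lborel) \<le> C * (LINT x:{-1<..<1}|lborel. (poly f x)\<^sup>2)"
    and "\<And>f m. m \<in> {0, 2, 4} \<Longrightarrow> (\<integral>t. (ext1 m f t)\<^sup>2 \<partial>lborel) \<le>
      C * (LINT x:{-1<..<1}|lborel. (poly f x)\<^sup>2 + (poly ((pderiv ^^ 2) f) x)\<^sup>2 + (poly ((pderiv ^^ 4) f) x)\<^sup>2)"
proof -
  obtain C where C: "0 \<le> C"
    "\<And>f. sq_integral 1 2 (right_ext f) \<le> C * sq_integral (-1) 1 f"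
    "\<And>f m. m \<in> {0, 2, 4} \<Longrightarrow> sq_integral 1 2 ((pderiv ^^ m) (right_ext f)) \<le> C * even_energy (-1) 1 f"
    using right_ext_sq_integral_bounds by blast
  show ?thesis
  proof (rule that)
    show "0 \<le> 2 * C + 1" using C(1) by simp
  next
    fix f
    have "(\<integral>t. (ext1 0 f t)\<^sup>2 \<partial>lborel)
        \<le> C * sq_integral (-1) 1 (mirror f) + sq_integral (-1) 1 f + C * sq_integral (-1) 1 f"
      using integral_lborel_ext1_square[of 0 f] integral_ext1_square[of 0 f] C(2)[of "mirror f"] C(2)[of f]
      by simp
    then show "(\<integral>t. (ext1 0 f t)\<^sup>2 \<partial>lborel) \<le> (2 * C + 1) * (LINT x:{-1<..<1}|lborel. (poly f x)\<^sup>2)"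
      using sq_integral_higher_pderiv_mirror[of 0 f]
      by (simp add: algebra_simps flip: sq_integral_eq_set_integral)
  next
    fix f and m :: nat assume m: "m \<in> {0, 2, 4}"
    then have "m \<le> 4" by auto
    have "(\<integral>t. (ext1 m f t)\<^sup>2 \<partial>lborel)
        \<le> C * even_energy (-1) 1 (mirror f) + even_energy (-1) 1 f + C * even_energy (-1) 1 f"
      using integral_lborel_ext1_square[OF \<open>m \<le> 4\<close>, of f] integral_ext1_square[OF \<open>m \<le> 4\<close>, of f]
        C(3)[OF m, of "mirror f"] C(3)[OF m, of f] sq_integral_le_even_energy[OF m, of "-1" 1 f]
      by simp
    then show "(\<integral>t. (ext1 m f t)\<^sup>2 \<partial>lborel) \<le> (2 * C + 1) *
        (LINT x:{-1<..<1}|lborel. (poly f x)\<^sup>2 + (poly ((pderiv ^^ 2) f) x)\<^sup>2 + (poly ((pderiv ^^ 4) f) x)\<^sup>2)"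
      unfolding even_energy_eq_set_integral[symmetric] by (simp add: even_energy_mirror algebra_simps)
  qed
qed

section \<open>Weak derivatives of tensor products\<close>

lemma integrable_lborel_continuous_vanishing:
  fixes G :: "'a::euclidean_space \<Rightarrow> real"
  assumes "continuous_on UNIV G" and "\<And>z. R < norm z \<Longrightarrow> G z = 0"
  shows "integrable lborel G"
proof -
  have "integrable lborel (\<lambda>z. indicator (cball 0 R) z *\<^sub>R G z)"
    by (rule borel_integrable_compact) (auto intro: continuous_on_subset[OF assms(1)])
  moreover have "(\<lambda>z. indicator (cball 0 R) z *\<^sub>R G z) = G"
    using assms(2) by (auto simp: indicator_def fun_eq_iff)
  ultimately show ?thesis by simp
qed

lemma L2_continuous_vanishing:
  assumes "continuous_on UNIV G" and "\<And>z. R < norm z \<Longrightarrow> G z = 0"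
  shows "L2 G"
  unfolding L2_def
proof
  show "G \<in> borel_measurable lborel" using assms(1) by (simp add: borel_measurable_continuous_onI)
  show "integrable lborel (\<lambda>z. (G z)\<^sup>2)"
    by (rule integrable_lborel_continuous_vanishing[of _ R]) (use assms in \<open>auto intro: continuous_intros\<close>)
qed

lemma integral_by_parts_vanishing:
  fixes f f' g g' :: "real \<Rightarrow> real"
  assumes df: "\<And>t. (f has_real_derivative f' t) (at t)" and "continuous_on UNIV f'"
    and dg: "\<And>t. (g has_real_derivative g' t) (at t)" and "continuous_on UNIV g'"
    and vanish: "\<And>t. R < \<bar>t\<bar> \<Longrightarrow> g t = 0 \<and> g' t = 0"
  shows "(\<integral>t. f t * g' t \<partial>lborel) = - (\<integral>t. f' t * g t \<partial>lborel)"
proof -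
  define R' where "R' = \<bar>R\<bar> + 1"
  have vanish': "R' \<le> \<bar>t\<bar> \<Longrightarrow> g t = 0 \<and> g' t = 0" for t using vanish[of t] by (simp add: R'_def)
  have "continuous_on UNIV f" "continuous_on UNIV g"
    using df dg by (auto intro: DERIV_continuous_on)
  then have cont: "continuous_on UNIV (\<lambda>t. f t * g' t)" "continuous_on UNIV (\<lambda>t. f' t * g t)"
    using assms(2,4) by (auto intro: continuous_on_mult)
  then have integrable: "(\<lambda>t. f t * g' t) integrable_on {-R'..R'}" "(\<lambda>t. f' t * g t) integrable_on {-R'..R'}"
    by (auto intro: integrable_continuous_real continuous_on_subset)
  have "((\<lambda>t. f' t * g t + f t * g' t) has_integral (f R' * g R' - f (-R') * g (-R'))) {-R'..R'}"
  proof (rule fundamental_theorem_of_calculus)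
    fix x :: real
    have "((\<lambda>t. f t * g t) has_real_derivative f' x * g x + f x * g' x) (at x)"
      using DERIV_mult[OF df dg] by (simp add: mult.commute)
    then show "((\<lambda>t. f t * g t) has_vector_derivative f' x * g x + f x * g' x) (at x within {-R'..R'})"
      by (simp add: has_real_derivative_iff_has_vector_derivative[symmetric] has_field_derivative_at_within)
  qed (simp add: R'_def)
  moreover have "g R' = 0" "g (-R') = 0" using vanish'[of R'] vanish'[of "-R'"] by (auto simp: R'_def)
  ultimately have "integral {-R'..R'} (\<lambda>t. f' t * g t) + integral {-R'..R'} (\<lambda>t. f t * g' t) = 0"
    using integrable by (simp add: integral_unique integral_add[symmetric])
  moreover have "(\<integral>t. f t * g' t \<partial>lborel) = integral {-R'..R'} (\<lambda>t. f t * g' t)"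
    and "(\<integral>t. f' t * g t \<partial>lborel) = integral {-R'..R'} (\<lambda>t. f' t * g t)"
    using cont vanish' by (auto intro!: integral_lborel_eq_integral_Icc)
  ultimately show ?thesis by linarith
qed

lemma dpar_eq_0_outside:
  assumes "\<And>z. R < norm z \<Longrightarrow> \<psi> z = 0" and "R < norm z"
  shows "dpar d \<psi> z = 0"
proof -
  obtain x y where z: "z = (x, y)" by (cases z)
  show ?thesis
  proof (cases d)
    case True
    have "((\<lambda>t. \<psi> (t, y)) has_field_derivative 0) (at x)"
    proof (rule has_field_derivative_transform_within_open[of "\<lambda>t. 0" 0 x "{t. R < norm (t, y)}"])
      show "open {t. R < norm (t, y)}" by (intro open_Collect_less continuous_intros)
    qed (use assms z in auto)
    then show ?thesis using True z by (simp add: dpar_def DERIV_imp_deriv)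
  next
    case False
    have "((\<lambda>t. \<psi> (x, t)) has_field_derivative 0) (at y)"
    proof (rule has_field_derivative_transform_within_open[of "\<lambda>t. 0" 0 y "{t. R < norm (x, t)}"])
      show "open {t. R < norm (x, t)}" by (intro open_Collect_less continuous_intros)
    qed (use assms z in auto)
    then show ?thesis using False z by (simp add: dpar_def DERIV_imp_deriv)
  qed
qed

lemma dpars_eq_0_outside:
  assumes "\<And>z. R < norm z \<Longrightarrow> \<psi> z = 0" and "R < norm z"
  shows "dpars ds \<psi> z = 0"
  using assms(2)
proof (induction ds arbitrary: z)
  case (Cons d ds)
  then show ?case by (simp add: dpar_eq_0_outside[of R "dpars ds \<psi>"])
qed (use assms(1) in simp)

lemma dpars_append: "dpars ds' (dpars ds \<phi>) = dpars (ds' @ ds) \<phi>"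
  by (induction ds') auto

lemma test_fun_vanishes_outside:
  assumes "test_fun \<phi>"
  obtains R where "0 < R" and "\<And>z. R < norm z \<Longrightarrow> \<phi> z = 0"
proof -
  from assms obtain R where "\<forall>z\<in>{z. \<phi> z \<noteq> 0}. norm z \<le> R"
    unfolding test_fun_def bounded_iff by blast
  then show ?thesis by (intro that[of "max R 1"]) force+
qed

lemma test_fun_dpars:
  assumes "test_fun \<phi>"
  shows "test_fun (dpars ds \<phi>)"
proof -
  obtain R where "0 < R" "\<And>z. R < norm z \<Longrightarrow> \<phi> z = 0"
    using test_fun_vanishes_outside[OF assms] by blast
  then have "{z. dpars ds \<phi> z \<noteq> 0} \<subseteq> cball 0 R"
    using dpars_eq_0_outside[of R \<phi>] by force
  then have "bounded {z. dpars ds \<phi> z \<noteq> 0}" by (rule bounded_subset[OF bounded_cball])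
  then show ?thesis using assms unfolding test_fun_def dpars_append by auto
qed

lemma test_fun_props:
  assumes "test_fun \<psi>"
  shows "continuous_on UNIV \<psi>" and "continuous_on UNIV (dpar d \<psi>)"
    and "((\<lambda>t. \<psi> (t, y)) has_real_derivative dpar True \<psi> (x, y)) (at x)"
    and "((\<lambda>t. \<psi> (x, t)) has_real_derivative dpar False \<psi> (x, y)) (at y)"
proof -
  have "continuous_on UNIV (dpars ds \<psi>)" for ds using assms by (simp add: test_fun_def)
  from this[of "[]"] this[of "[d]"]
  show "continuous_on UNIV \<psi>" "continuous_on UNIV (dpar d \<psi>)" by simp_all
  have "(\<lambda>t. dpars [] \<psi> (t, y)) differentiable (at x)" "(\<lambda>t. dpars [] \<psi> (x, t)) differentiable (at y)"
    using assms unfolding test_fun_def by blast+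
  then show "((\<lambda>t. \<psi> (t, y)) has_real_derivative dpar True \<psi> (x, y)) (at x)"
    "((\<lambda>t. \<psi> (x, t)) has_real_derivative dpar False \<psi> (x, y)) (at y)"
    by (simp_all add: dpar_def DERIV_deriv_iff_real_differentiable)
qed

lemma continuous_on_compose_fst: "continuous_on UNIV F \<Longrightarrow> continuous_on UNIV (\<lambda>z::real \<times> real. F (fst z))"
  by (rule continuous_on_compose2[of UNIV F UNIV fst]) (auto intro: continuous_intros)

lemma continuous_on_compose_snd: "continuous_on UNIV F \<Longrightarrow> continuous_on UNIV (\<lambda>z::real \<times> real. F (snd z))"
  by (rule continuous_on_compose2[of UNIV F UNIV snd]) (auto intro: continuous_intros)

lemma continuous_on_Pair_left: "continuous_on UNIV G \<Longrightarrow> continuous_on UNIV (\<lambda>t. G (t, y :: real))"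
  by (rule continuous_on_compose2[of UNIV G UNIV "\<lambda>t. (t, y)"]) (auto intro: continuous_intros)

lemma continuous_on_Pair_right: "continuous_on UNIV G \<Longrightarrow> continuous_on UNIV (\<lambda>t. G (x :: real, t))"
  by (rule continuous_on_compose2[of UNIV G UNIV "\<lambda>t. (x, t)"]) (auto intro: continuous_intros)

lemma lborel_integral_prod_fst:
  fixes G :: "real \<times> real \<Rightarrow> real"
  assumes "integrable lborel G"
  shows "(\<integral>z. G z \<partial>lborel) = (\<integral>x. (\<integral>y. G (x, y) \<partial>lborel) \<partial>lborel)"
    and "integrable lborel (\<lambda>x. \<integral>y. G (x, y) \<partial>lborel)"
proof -
  have "integrable (lborel \<Otimes>\<^sub>M lborel) (case_prod (\<lambda>x y. G (x, y)))"
    using assms by (simp add: lborel_prod)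
  from lborel_pair.integral_fst[OF this] lborel_pair.integrable_fst[OF this]
  show "(\<integral>z. G z \<partial>lborel) = (\<integral>x. (\<integral>y. G (x, y) \<partial>lborel) \<partial>lborel)"
    and "integrable lborel (\<lambda>x. \<integral>y. G (x, y) \<partial>lborel)"
    by (simp_all add: lborel_prod)
qed

lemma lborel_integral_prod_snd:
  fixes G :: "real \<times> real \<Rightarrow> real"
  assumes "integrable lborel G"
  shows "(\<integral>z. G z \<partial>lborel) = (\<integral>y. (\<integral>x. G (x, y) \<partial>lborel) \<partial>lborel)"
    and "integrable lborel (\<lambda>y. \<integral>x. G (x, y) \<partial>lborel)"
proof -
  have "integrable (lborel \<Otimes>\<^sub>M lborel) (case_prod (\<lambda>x y. G (x, y)))"
    using assms by (simp add: lborel_prod)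
  from lborel_pair.integral_snd[OF this] lborel_pair.integrable_snd[OF this]
  show "(\<integral>z. G z \<partial>lborel) = (\<integral>y. (\<integral>x. G (x, y) \<partial>lborel) \<partial>lborel)"
    and "integrable lborel (\<lambda>y. \<integral>x. G (x, y) \<partial>lborel)"
    by (simp_all add: lborel_prod)
qed

lemma integral_tensor_dpar_True:
  fixes F F' H :: "real \<Rightarrow> real"
  assumes dF: "\<And>t. (F has_real_derivative F' t) (at t)" and cF': "continuous_on UNIV F'"
    and cH: "continuous_on UNIV H" and \<psi>: "test_fun \<psi>"
  shows "(\<integral>z. F (fst z) * H (snd z) * dpar True \<psi> z \<partial>lborel)
    = - (\<integral>z. F' (fst z) * H (snd z) * \<psi> z \<partial>lborel)"
proof -
  obtain R where R: "0 < R" "\<And>z. R < norm z \<Longrightarrow> \<psi> z = 0"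
    using test_fun_vanishes_outside[OF \<psi>] by blast
  have R': "\<And>z. R < norm z \<Longrightarrow> dpar True \<psi> z = 0" using dpar_eq_0_outside[of R \<psi>] R by auto
  note tp = test_fun_props[OF \<psi>]
  have cF: "continuous_on UNIV F" using dF by (intro DERIV_continuous_on) auto
  have i1: "integrable lborel (\<lambda>z. F (fst z) * H (snd z) * dpar True \<psi> z)"
    by (rule integrable_lborel_continuous_vanishing[of _ R])
       (auto intro!: continuous_intros continuous_on_compose_fst continuous_on_compose_snd cF cH tp(2) simp: R')
  have i2: "integrable lborel (\<lambda>z. F' (fst z) * H (snd z) * \<psi> z)"
    by (rule integrable_lborel_continuous_vanishing[of _ R])
       (auto intro!: continuous_intros continuous_on_compose_fst continuous_on_compose_snd cF' cH tp(1) simp: R)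
  have inner: "(\<integral>x. F x * H y * dpar True \<psi> (x, y) \<partial>lborel) = - (\<integral>x. F' x * H y * \<psi> (x, y) \<partial>lborel)" for y
  proof -
    have "(\<integral>x. F x * dpar True \<psi> (x, y) \<partial>lborel) = - (\<integral>x. F' x * \<psi> (x, y) \<partial>lborel)"
    proof (rule integral_by_parts_vanishing[OF dF cF' tp(3) continuous_on_Pair_left[OF tp(2)]])
      fix t :: real assume "R < \<bar>t\<bar>"
      moreover have "\<bar>t\<bar> \<le> norm (t, y)" using norm_fst_le[of t y] by simp
      ultimately show "\<psi> (t, y) = 0 \<and> dpar True \<psi> (t, y) = 0" using R R' by auto
    qed
    moreover have "(\<integral>x. F x * H y * dpar True \<psi> (x, y) \<partial>lborel) = (\<integral>x. H y * (F x * dpar True \<psi> (x, y)) \<partial>lborel)"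
      and "(\<integral>x. F' x * H y * \<psi> (x, y) \<partial>lborel) = (\<integral>x. H y * (F' x * \<psi> (x, y)) \<partial>lborel)"
      by (simp_all add: ac_simps)
    ultimately show ?thesis by (simp only: integral_mult_right_zero)
  qed
  have "(\<integral>z. F (fst z) * H (snd z) * dpar True \<psi> z \<partial>lborel)
      = (\<integral>y. (\<integral>x. F x * H y * dpar True \<psi> (x, y) \<partial>lborel) \<partial>lborel)"
    using lborel_integral_prod_snd(1)[OF i1] by simp
  also have "\<dots> = - (\<integral>y. (\<integral>x. F' x * H y * \<psi> (x, y) \<partial>lborel) \<partial>lborel)"
    by (simp add: inner)
  also have "\<dots> = - (\<integral>z. F' (fst z) * H (snd z) * \<psi> z \<partial>lborel)"
    using lborel_integral_prod_snd(1)[OF i2] by simp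
  finally show ?thesis .
qed

lemma integral_tensor_dpar_False:
  fixes F H H' :: "real \<Rightarrow> real"
  assumes dH: "\<And>t. (H has_real_derivative H' t) (at t)" and cH': "continuous_on UNIV H'"
    and cF: "continuous_on UNIV F" and \<psi>: "test_fun \<psi>"
  shows "(\<integral>z. F (fst z) * H (snd z) * dpar False \<psi> z \<partial>lborel)
    = - (\<integral>z. F (fst z) * H' (snd z) * \<psi> z \<partial>lborel)"
proof -
  obtain R where R: "0 < R" "\<And>z. R < norm z \<Longrightarrow> \<psi> z = 0"
    using test_fun_vanishes_outside[OF \<psi>] by blast
  have R': "\<And>z. R < norm z \<Longrightarrow> dpar False \<psi> z = 0" using dpar_eq_0_outside[of R \<psi>] R by auto
  note tp = test_fun_props[OF \<psi>]
  have cH: "continuous_on UNIV H" using dH by (intro DERIV_continuous_on) auto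
  have i1: "integrable lborel (\<lambda>z. F (fst z) * H (snd z) * dpar False \<psi> z)"
    by (rule integrable_lborel_continuous_vanishing[of _ R])
       (auto intro!: continuous_intros continuous_on_compose_fst continuous_on_compose_snd cF cH tp(2) simp: R')
  have i2: "integrable lborel (\<lambda>z. F (fst z) * H' (snd z) * \<psi> z)"
    by (rule integrable_lborel_continuous_vanishing[of _ R])
       (auto intro!: continuous_intros continuous_on_compose_fst continuous_on_compose_snd cF cH' tp(1) simp: R)
  have inner: "(\<integral>y. F x * H y * dpar False \<psi> (x, y) \<partial>lborel) = - (\<integral>y. F x * H' y * \<psi> (x, y) \<partial>lborel)" for x
  proof -
    have "(\<integral>y. H y * dpar False \<psi> (x, y) \<partial>lborel) = - (\<integral>y. H' y * \<psi> (x, y) \<partial>lborel)"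
    proof (rule integral_by_parts_vanishing[OF dH cH' tp(4) continuous_on_Pair_right[OF tp(2)]])
      fix t :: real assume "R < \<bar>t\<bar>"
      moreover have "\<bar>t\<bar> \<le> norm (x, t)" using norm_snd_le[of t x] by simp
      ultimately show "\<psi> (x, t) = 0 \<and> dpar False \<psi> (x, t) = 0" using R R' by auto
    qed
    moreover have "(\<integral>y. F x * H y * dpar False \<psi> (x, y) \<partial>lborel) = (\<integral>y. F x * (H y * dpar False \<psi> (x, y)) \<partial>lborel)"
      and "(\<integral>y. F x * H' y * \<psi> (x, y) \<partial>lborel) = (\<integral>y. F x * (H' y * \<psi> (x, y)) \<partial>lborel)"
      by (simp_all add: ac_simps)
    ultimately show ?thesis by (simp only: integral_mult_right_zero)
  qed
  have "(\<integral>z. F (fst z) * H (snd z) * dpar False \<psi> z \<partial>lborel)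
      = (\<integral>x. (\<integral>y. F x * H y * dpar False \<psi> (x, y) \<partial>lborel) \<partial>lborel)"
    using lborel_integral_prod_fst(1)[OF i1] by simp
  also have "\<dots> = - (\<integral>x. (\<integral>y. F x * H' y * \<psi> (x, y) \<partial>lborel) \<partial>lborel)"
    by (simp add: inner)
  also have "\<dots> = - (\<integral>z. F (fst z) * H' (snd z) * \<psi> z \<partial>lborel)"
    using lborel_integral_prod_fst(1)[OF i2] by simp
  finally show ?thesis .
qed

abbreviation count_True :: "bool list \<Rightarrow> nat" where
  "count_True ds \<equiv> length (filter (\<lambda>b. b) ds)"

abbreviation count_False :: "bool list \<Rightarrow> nat" where
  "count_False ds \<equiv> length (filter Not ds)"

lemma integral_tensor_dpars:
  fixes F H :: "nat \<Rightarrow> real \<Rightarrow> real"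
  assumes dF: "\<And>m t. m < 4 \<Longrightarrow> (F m has_real_derivative F (Suc m) t) (at t)"
    and cF: "\<And>m. m \<le> 4 \<Longrightarrow> continuous_on UNIV (F m)"
    and dH: "\<And>m t. m < 4 \<Longrightarrow> (H m has_real_derivative H (Suc m) t) (at t)"
    and cH: "\<And>m. m \<le> 4 \<Longrightarrow> continuous_on UNIV (H m)"
    and \<phi>: "test_fun \<phi>"
  shows "count_True ds + p \<le> 4 \<Longrightarrow> count_False ds + q \<le> 4 \<Longrightarrow>
    (\<integral>z. F p (fst z) * H q (snd z) * dpars ds \<phi> z \<partial>lborel) =
    (-1) ^ length ds * (\<integral>z. F (p + count_True ds) (fst z) * H (q + count_False ds) (snd z) * \<phi> z \<partial>lborel)"
proof (induction ds arbitrary: p q)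
  case (Cons d ds)
  have \<psi>: "test_fun (dpars ds \<phi>)" by (rule test_fun_dpars[OF \<phi>])
  show ?case
  proof (cases d)
    case True
    then have p: "p < 4" and IH: "(\<integral>z. F (Suc p) (fst z) * H q (snd z) * dpars ds \<phi> z \<partial>lborel) =
        (-1) ^ length ds * (\<integral>z. F (Suc p + count_True ds) (fst z) * H (q + count_False ds) (snd z) * \<phi> z \<partial>lborel)"
      using Cons by auto
    have "(\<integral>z. F p (fst z) * H q (snd z) * dpar True (dpars ds \<phi>) z \<partial>lborel)
        = - (\<integral>z. F (Suc p) (fst z) * H q (snd z) * dpars ds \<phi> z \<partial>lborel)"
      by (rule integral_tensor_dpar_True[OF dF[OF p] _ _ \<psi>]) (use p Cons.prems True in \<open>auto intro: cF cH\<close>)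
    then show ?thesis using True IH by simp
  next
    case False
    then have q: "q < 4" and IH: "(\<integral>z. F p (fst z) * H (Suc q) (snd z) * dpars ds \<phi> z \<partial>lborel) =
        (-1) ^ length ds * (\<integral>z. F (p + count_True ds) (fst z) * H (Suc q + count_False ds) (snd z) * \<phi> z \<partial>lborel)"
      using Cons by auto
    have "(\<integral>z. F p (fst z) * H q (snd z) * dpar False (dpars ds \<phi>) z \<partial>lborel)
        = - (\<integral>z. F p (fst z) * H (Suc q) (snd z) * dpars ds \<phi> z \<partial>lborel)"
      by (rule integral_tensor_dpar_False[OF dH[OF q] _ _ \<psi>]) (use q Cons.prems False in \<open>auto intro: cF cH\<close>)
    then show ?thesis using False IH by simp
  qed
qed simp

definition tensor_poly :: "(nat \<Rightarrow> real poly) \<Rightarrow> nat \<Rightarrow> (nat \<Rightarrow> nat \<Rightarrow> real) \<Rightarrow> nat \<Rightarrow> nat \<Rightarrow> real \<times> real \<Rightarrow> real" where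
  "tensor_poly P W a p q z =
     (\<Sum>i\<le>W. \<Sum>j\<le>W. a i j * poly ((pderiv ^^ p) (P i)) (fst z) * poly ((pderiv ^^ q) (P j)) (snd z))"

definition tensor_ext :: "(nat \<Rightarrow> real poly) \<Rightarrow> nat \<Rightarrow> (nat \<Rightarrow> nat \<Rightarrow> real) \<Rightarrow> nat \<Rightarrow> nat \<Rightarrow> real \<times> real \<Rightarrow> real" where
  "tensor_ext P W a p q z = (\<Sum>i\<le>W. \<Sum>j\<le>W. a i j * (ext1 p (P i) (fst z) * ext1 q (P j) (snd z)))"

lemma leg_u_eq_tensor_poly: "leg_u W a = tensor_poly legendre W a 0 0"
  by (auto simp: leg_u_def tensor_poly_def fun_eq_iff)

lemma dpar_True_tensor_poly: "dpar True (tensor_poly P W a p q) = tensor_poly P W a (Suc p) q"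
proof (rule ext, clarify)
  fix x y :: real
  have "((\<lambda>t. tensor_poly P W a p q (t, y)) has_real_derivative tensor_poly P W a (Suc p) q (x, y)) (at x)"
    unfolding tensor_poly_def fst_conv snd_conv funpow.simps o_apply
    by (intro DERIV_sum DERIV_cmult_right DERIV_cmult poly_DERIV)
  then show "dpar True (tensor_poly P W a p q) (x, y) = tensor_poly P W a (Suc p) q (x, y)"
    by (simp add: dpar_def DERIV_imp_deriv)
qed

lemma dpar_False_tensor_poly: "dpar False (tensor_poly P W a p q) = tensor_poly P W a p (Suc q)"
proof (rule ext, clarify)
  fix x y :: real
  have "((\<lambda>t. tensor_poly P W a p q (x, t)) has_real_derivative tensor_poly P W a p (Suc q) (x, y)) (at y)"
    unfolding tensor_poly_def fst_conv snd_conv funpow.simps o_apply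
    by (intro DERIV_sum DERIV_cmult poly_DERIV)
  then show "dpar False (tensor_poly P W a p q) (x, y) = tensor_poly P W a p (Suc q) (x, y)"
    by (simp add: dpar_def DERIV_imp_deriv)
qed

lemma dpars_tensor_poly:
  "dpars ds (tensor_poly P W a p q) = tensor_poly P W a (p + count_True ds) (q + count_False ds)"
  by (induction ds arbitrary: p q) (auto simp: dpar_True_tensor_poly dpar_False_tensor_poly)

lemma continuous_on_tensor_ext: "p \<le> 4 \<Longrightarrow> q \<le> 4 \<Longrightarrow> continuous_on UNIV (tensor_ext P W a p q)"
  unfolding tensor_ext_def[abs_def]
  by (intro continuous_intros continuous_on_compose_fst continuous_on_compose_snd continuous_on_ext1)

lemma tensor_ext_eq_0_outside: "4 < norm z \<Longrightarrow> tensor_ext P W a p q z = 0"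
proof -
  assume z: "4 < norm z"
  obtain x y where xy: "z = (x, y)" by (cases z)
  have "norm (x, y) \<le> \<bar>x\<bar> + \<bar>y\<bar>"
    using norm_triangle_ineq[of "(x, 0)" "(0, y)"] by (simp add: norm_Pair)
  then have "2 < \<bar>x\<bar> \<or> 2 < \<bar>y\<bar>" using z xy by auto
  then show ?thesis unfolding tensor_ext_def xy using ext1_outside by auto
qed

lemma L2_tensor_ext: "p \<le> 4 \<Longrightarrow> q \<le> 4 \<Longrightarrow> L2 (tensor_ext P W a p q)"
  by (rule L2_continuous_vanishing[OF continuous_on_tensor_ext tensor_ext_eq_0_outside])

lemma tensor_ext_on_S: "z \<in> S \<Longrightarrow> tensor_ext P W a 0 0 z = tensor_poly P W a 0 0 z"
  by (auto simp: S_def tensor_ext_def tensor_poly_def ext1_inside mult.assoc)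

lemma weak_pderiv_tensor_ext:
  assumes "count_True ds \<le> 4" "count_False ds \<le> 4"
  shows "weak_pderiv ds (tensor_ext P W a 0 0) (tensor_ext P W a (count_True ds) (count_False ds))"
  unfolding weak_pderiv_def
proof (intro allI impI)
  fix \<phi> assume \<phi>: "test_fun \<phi>"
  obtain R where R: "0 < R" "\<And>z. R < norm z \<Longrightarrow> \<phi> z = 0"
    using test_fun_vanishes_outside[OF \<phi>] by blast
  have cd: "continuous_on UNIV (dpars ds \<phi>)" using \<phi> by (simp add: test_fun_def)
  define T1 where "T1 i j z = ext1 0 (P i) (fst z) * ext1 0 (P j) (snd z) * dpars ds \<phi> z" for i j z
  define T2 where "T2 i j z = ext1 (count_True ds) (P i) (fst z) * ext1 (count_False ds) (P j) (snd z) * \<phi> z"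
    for i j z
  have i1: "integrable lborel (T1 i j)" for i j
    unfolding T1_def using dpars_eq_0_outside[of R \<phi>] R
    by (intro integrable_lborel_continuous_vanishing[of _ R])
       (auto intro!: continuous_intros continuous_on_compose_fst continuous_on_compose_snd continuous_on_ext1 cd)
  have i2: "integrable lborel (T2 i j)" for i j
    unfolding T2_def using assms R test_fun_props(1)[OF \<phi>]
    by (intro integrable_lborel_continuous_vanishing[of _ R])
       (auto intro!: continuous_intros continuous_on_compose_fst continuous_on_compose_snd continuous_on_ext1)
  have parts: "(\<integral>z. T1 i j z \<partial>lborel) = (-1) ^ length ds * (\<integral>z. T2 i j z \<partial>lborel)" for i j
    unfolding T1_def T2_def
    using integral_tensor_dpars[of "\<lambda>m. ext1 m (P i)" "\<lambda>m. ext1 m (P j)" \<phi> ds 0 0] assms \<phi>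
    by (auto intro: has_real_derivative_ext1 continuous_on_ext1)
  have "(\<integral>z. tensor_ext P W a 0 0 z * dpars ds \<phi> z \<partial>lborel) = (\<integral>z. (\<Sum>i\<le>W. \<Sum>j\<le>W. a i j * T1 i j z) \<partial>lborel)"
    unfolding tensor_ext_def T1_def
    by (intro Bochner_Integration.integral_cong refl) (simp add: sum_distrib_left sum_distrib_right ac_simps)
  also have "\<dots> = (\<Sum>i\<le>W. \<Sum>j\<le>W. a i j * (\<integral>z. T1 i j z \<partial>lborel))"
    using i1 by (simp add: Bochner_Integration.integral_sum integrable_sum)
  also have "\<dots> = (-1) ^ length ds * (\<Sum>i\<le>W. \<Sum>j\<le>W. a i j * (\<integral>z. T2 i j z \<partial>lborel))"
    by (simp add: parts sum_distrib_left ac_simps)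
  also have "(\<Sum>i\<le>W. \<Sum>j\<le>W. a i j * (\<integral>z. T2 i j z \<partial>lborel)) = (\<integral>z. (\<Sum>i\<le>W. \<Sum>j\<le>W. a i j * T2 i j z) \<partial>lborel)"
    using i2 by (simp add: Bochner_Integration.integral_sum integrable_sum)
  also have "\<dots> = (\<integral>z. tensor_ext P W a (count_True ds) (count_False ds) z * \<phi> z \<partial>lborel)"
    unfolding tensor_ext_def T2_def
    by (intro Bochner_Integration.integral_cong refl) (simp add: sum_distrib_left sum_distrib_right ac_simps)
  finally show "(\<integral>z. tensor_ext P W a 0 0 z * dpars ds \<phi> z \<partial>lborel)
      = (-1) ^ length ds * (\<integral>z. tensor_ext P W a (count_True ds) (count_False ds) z * \<phi> z \<partial>lborel)" .
qed

lemma H4_tensor_ext: "H4 (tensor_ext P W a 0 0)"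
  unfolding H4_def
proof (intro conjI allI impI)
  show "L2 (tensor_ext P W a 0 0)" by (rule L2_tensor_ext) auto
  fix ds :: "bool list" assume "length ds \<le> 4"
  then have "count_True ds \<le> 4" "count_False ds \<le> 4"
    using length_filter_le[of "\<lambda>b. b" ds] length_filter_le[of Not ds] by linarith+
  then show "\<exists>g. L2 g \<and> weak_pderiv ds (tensor_ext P W a 0 0) g"
    using weak_pderiv_tensor_ext L2_tensor_ext by blast
qed

lemma integrable_indicator_mult_continuous:
  fixes g :: "'a::euclidean_space \<Rightarrow> real"
  assumes "continuous_on UNIV g" "compact K" "A \<in> sets lborel" "\<And>z. z \<in> A \<Longrightarrow> g z \<noteq> 0 \<Longrightarrow> z \<in> K"
  shows "integrable lborel (\<lambda>z. indicator A z * g z)"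
proof -
  have "integrable lborel (\<lambda>z. indicator K z *\<^sub>R g z)"
    by (rule borel_integrable_compact[OF assms(2)]) (auto intro: continuous_on_subset[OF assms(1)])
  then have "integrable lborel (\<lambda>z. indicator A z *\<^sub>R (indicator K z *\<^sub>R g z))"
    by (rule integrable_mult_indicator[OF assms(3)])
  moreover have "(\<lambda>z. indicator A z *\<^sub>R (indicator K z *\<^sub>R g z)) = (\<lambda>z. indicator A z * g z)"
  proof
    fix z show "indicator A z *\<^sub>R (indicator K z *\<^sub>R g z) = indicator A z * g z"
      using assms(4)[of z] by (cases "z \<in> A"; cases "z \<in> K") auto
  qed
  ultimately show ?thesis by simp
qed

definition ext_fst :: "(nat \<Rightarrow> real poly) \<Rightarrow> nat \<Rightarrow> (nat \<Rightarrow> nat \<Rightarrow> real) \<Rightarrow> nat \<Rightarrow> real \<times> real \<Rightarrow> real" where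
  "ext_fst P W a p z = (\<Sum>i\<le>W. \<Sum>j\<le>W. a i j * ext1 p (P i) (fst z) * poly (P j) (snd z))"

lemma tensor_ext_snd_section:
  obtains q where "\<And>y. tensor_ext P W a p 0 (x, y) = ext1 0 q y" and "\<And>y. poly q y = ext_fst P W a p (x, y)"
proof
  let ?q = "\<Sum>j\<le>W. smult (\<Sum>i\<le>W. a i j * ext1 p (P i) x) (P j)"
  show "tensor_ext P W a p 0 (x, y) = ext1 0 ?q y" "poly ?q y = ext_fst P W a p (x, y)" for y
    unfolding ext1_linear tensor_ext_def ext_fst_def poly_sum poly_smult fst_conv snd_conv
    by (subst sum.swap; simp add: sum_distrib_left sum_distrib_right ac_simps)+
qed

lemma ext_fst_fst_section:
  obtains r where "\<And>x. ext_fst P W a p (x, y) = ext1 p r x"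
    and "\<And>k x. poly ((pderiv ^^ k) r) x = tensor_poly P W a k 0 (x, y)"
proof
  let ?r = "\<Sum>i\<le>W. smult (\<Sum>j\<le>W. a i j * poly (P j) y) (P i)"
  show "ext_fst P W a p (x, y) = ext1 p ?r x" "poly ((pderiv ^^ k) ?r) x = tensor_poly P W a k 0 (x, y)" for k x
    unfolding ext1_linear ext_fst_def tensor_poly_def higher_pderiv_sum higher_pderiv_smult poly_sum
      poly_smult fst_conv snd_conv
    by (simp_all add: sum_distrib_left sum_distrib_right ac_simps)
qed

lemma integrable_ext_fst_strip:
  assumes "p \<le> 4"
  shows "integrable lborel (\<lambda>z. indicator (UNIV \<times> {-1<..<1}) z * (ext_fst P W a p z)\<^sup>2)"
proof (rule integrable_indicator_mult_continuous[where K = "{-2..2::real} \<times> {-1..1::real}"])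
  show "continuous_on UNIV (\<lambda>z. (ext_fst P W a p z)\<^sup>2)"
    unfolding ext_fst_def[abs_def]
    by (intro continuous_intros continuous_on_compose_fst continuous_on_ext1 assms)
  show "UNIV \<times> {-1<..<1::real} \<in> sets lborel" by (auto intro!: borel_open open_Times)
  fix z :: "real \<times> real" assume z: "z \<in> UNIV \<times> {-1<..<1}" "(ext_fst P W a p z)\<^sup>2 \<noteq> 0"
  moreover have "ext_fst P W a p z = 0" if "2 < \<bar>fst z\<bar>"
    using that by (simp add: ext_fst_def ext1_outside)
  ultimately have "\<bar>fst z\<bar> \<le> 2" by fastforce
  then show "z \<in> {-2..2} \<times> {-1..1}" using z by (cases z) auto
qed (intro compact_Times compact_Icc)

lemma integral_le_by_sections_fst:
  fixes G N :: "real \<times> real \<Rightarrow> real"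
  assumes "integrable lborel G" "integrable lborel N" "\<And>z. 0 \<le> N z" "0 \<le> C"
    and sections: "\<And>x. (\<integral>y. G (x, y) \<partial>lborel) \<le> C * (\<integral>y. N (x, y) \<partial>lborel)"
  shows "(\<integral>z. G z \<partial>lborel) \<le> C * (\<integral>z. N z \<partial>lborel)"
proof -
  have "(\<integral>z. G z \<partial>lborel) = (\<integral>x. (\<integral>y. G (x, y) \<partial>lborel) \<partial>lborel)"
    by (rule lborel_integral_prod_fst(1)[OF assms(1)])
  also have "\<dots> \<le> (\<integral>x. C * (\<integral>y. N (x, y) \<partial>lborel) \<partial>lborel)"
    using lborel_integral_prod_fst(2)[OF assms(2)] sections assms(3,4)
    by (intro integral_mono') (auto intro: integral_nonneg)
  also have "\<dots> = C * (\<integral>z. N z \<partial>lborel)"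
    using lborel_integral_prod_fst(1)[OF assms(2)] by simp
  finally show ?thesis .
qed

lemma integral_le_by_sections_snd:
  fixes G N :: "real \<times> real \<Rightarrow> real"
  assumes "integrable lborel G" "integrable lborel N" "\<And>z. 0 \<le> N z" "0 \<le> C"
    and sections: "\<And>y. (\<integral>x. G (x, y) \<partial>lborel) \<le> C * (\<integral>x. N (x, y) \<partial>lborel)"
  shows "(\<integral>z. G z \<partial>lborel) \<le> C * (\<integral>z. N z \<partial>lborel)"
proof -
  have "(\<integral>z. G z \<partial>lborel) = (\<integral>y. (\<integral>x. G (x, y) \<partial>lborel) \<partial>lborel)"
    by (rule lborel_integral_prod_snd(1)[OF assms(1)])
  also have "\<dots> \<le> (\<integral>y. C * (\<integral>x. N (x, y) \<partial>lborel) \<partial>lborel)"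
    using lborel_integral_prod_snd(2)[OF assms(2)] sections assms(3,4)
    by (intro integral_mono') (auto intro: integral_nonneg)
  also have "\<dots> = C * (\<integral>z. N z \<partial>lborel)"
    using lborel_integral_prod_snd(1)[OF assms(2)] by simp
  finally show ?thesis .
qed

lemma lborel_integral_swap:
  fixes G :: "real \<times> real \<Rightarrow> real"
  assumes "G \<in> borel_measurable lborel"
  shows "(\<integral>z. G (snd z, fst z) \<partial>lborel) = (\<integral>z. G z \<partial>lborel)"
proof -
  have "(\<lambda>(x, y). G (y, x)) = (\<lambda>z. G (snd z, fst z))" by auto
  then show ?thesis
    using lborel_pair.integral_product_swap[of G] assms by (simp add: lborel_prod)
qed

lemma S_in_sets_lborel: "S \<in> sets lborel"
  by (auto simp: S_def intro!: borel_open open_Times)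

lemma integrable_indicator_S:
  fixes g :: "real \<times> real \<Rightarrow> real"
  shows "continuous_on UNIV g \<Longrightarrow> integrable lborel (\<lambda>z. indicator S z * g z)"
  by (rule integrable_indicator_mult_continuous[OF _ _ S_in_sets_lborel, of _ "{-1..1::real} \<times> {-1..1::real}"])
     (auto intro: compact_Times simp: S_def)

context
  fixes C :: real
  assumes C_nonneg: "0 \<le> C"
    and ext1_bound_0: "\<And>f. (\<integral>t. (ext1 0 f t)\<^sup>2 \<partial>lborel) \<le> C * (LINT x:{-1<..<1}|lborel. (poly f x)\<^sup>2)"
    and ext1_bound: "\<And>f m. m \<in> {0, 2, 4} \<Longrightarrow> (\<integral>t. (ext1 m f t)\<^sup>2 \<partial>lborel) \<le>
      C * (LINT x:{-1<..<1}|lborel. (poly f x)\<^sup>2 + (poly ((pderiv ^^ 2) f) x)\<^sup>2 + (poly ((pderiv ^^ 4) f) x)\<^sup>2)"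
begin

lemma tensor_ext_section_bound:
  "(\<integral>y. (tensor_ext P W a p 0 (x, y))\<^sup>2 \<partial>lborel) \<le> C * (LINT y:{-1<..<1}|lborel. (ext_fst P W a p (x, y))\<^sup>2)"
proof -
  obtain q where "\<And>y. tensor_ext P W a p 0 (x, y) = ext1 0 q y" "\<And>y. poly q y = ext_fst P W a p (x, y)"
    using tensor_ext_snd_section[of P W a p x] by blast
  with ext1_bound_0[of q] show ?thesis by simp
qed

lemma ext_fst_section_bound:
  assumes "p \<in> {0, 2, 4}"
  shows "(\<integral>x. (ext_fst P W a p (x, y))\<^sup>2 \<partial>lborel) \<le> C * (LINT x:{-1<..<1}|lborel.
    (tensor_poly P W a 0 0 (x, y))\<^sup>2 + (tensor_poly P W a 2 0 (x, y))\<^sup>2 + (tensor_poly P W a 4 0 (x, y))\<^sup>2)"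
proof -
  obtain r where r: "\<And>x. ext_fst P W a p (x, y) = ext1 p r x"
    "\<And>k x. poly ((pderiv ^^ k) r) x = tensor_poly P W a k 0 (x, y)"
    using ext_fst_fst_section[of P W a p y] by blast
  moreover have "poly r x = tensor_poly P W a 0 0 (x, y)" for x using r(2)[of 0] by simp
  ultimately show ?thesis using ext1_bound[OF assms, of r] by simp
qed

lemma tensor_ext_sq_integral_fst:
  assumes p: "p \<in> {0, 2, 4}"
  shows "(\<integral>z. (tensor_ext P W a p 0 z)\<^sup>2 \<partial>lborel) \<le> C * (C * (LINT z:S|lborel.
    (tensor_poly P W a 0 0 z)\<^sup>2 + (tensor_poly P W a 2 0 z)\<^sup>2 + (tensor_poly P W a 4 0 z)\<^sup>2))"
proof -
  define N where "N z = indicator (UNIV \<times> {-1<..<1}) z * (ext_fst P W a p z)\<^sup>2" for z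
  define E where "E z = indicator S z * ((tensor_poly P W a 0 0 z)\<^sup>2 + (tensor_poly P W a 2 0 z)\<^sup>2
    + (tensor_poly P W a 4 0 z)\<^sup>2)" for z
  have "p \<le> 4" using p by auto
  then have integrable: "integrable lborel (\<lambda>z. (tensor_ext P W a p 0 z)\<^sup>2)" "integrable lborel N"
    using L2_tensor_ext[of p 0 P W a] integrable_ext_fst_strip unfolding N_def L2_def by auto
  have "integrable lborel E"
    unfolding E_def by (rule integrable_indicator_S) (simp add: tensor_poly_def, intro continuous_intros)
  have "(\<integral>z. (tensor_ext P W a p 0 z)\<^sup>2 \<partial>lborel) \<le> C * (\<integral>z. N z \<partial>lborel)"
    using tensor_ext_section_bound by (intro integral_le_by_sections_fst integrable C_nonneg)
      (simp_all add: N_def set_lebesgue_integral_def indicator_def mult.commute)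
  also have "(\<integral>z. N z \<partial>lborel) \<le> C * (\<integral>z. E z \<partial>lborel)"
  proof (intro integral_le_by_sections_snd integrable \<open>integrable lborel E\<close> C_nonneg)
    fix y :: real
    show "(\<integral>x. N (x, y) \<partial>lborel) \<le> C * (\<integral>x. E (x, y) \<partial>lborel)"
    proof (cases "y \<in> {-1<..<1}")
      case True
      then show ?thesis
        using ext_fst_section_bound[OF p, of P W a y]
        by (simp add: N_def E_def S_def set_lebesgue_integral_def indicator_def mult.commute)
    next
      case False
      then have "N (x, y) = 0" "E (x, y) = 0" for x
        by (auto simp: N_def E_def S_def indicator_def)
      then show ?thesis by simp
    qed
  qed (simp add: E_def)
  finally show ?thesis
    using C_nonneg unfolding set_lebesgue_integral_def E_def by (simp add: mult_left_mono)
qed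

lemma tensor_ext_sq_integral_snd:
  assumes q: "q \<in> {0, 2, 4}"
  shows "(\<integral>z. (tensor_ext P W a 0 q z)\<^sup>2 \<partial>lborel) \<le> C * (C * (LINT z:S|lborel.
    (tensor_poly P W a 0 0 z)\<^sup>2 + (tensor_poly P W a 0 2 z)\<^sup>2 + (tensor_poly P W a 0 4 z)\<^sup>2))"
proof -
  define b where "b i j = a j i" for i j
  define E where "E c z = indicator S z * ((tensor_poly P W c 0 0 z)\<^sup>2 + (tensor_poly P W c 2 0 z)\<^sup>2
    + (tensor_poly P W c 4 0 z)\<^sup>2)" for c z
  have swap_ext: "tensor_ext P W a 0 q z = tensor_ext P W b q 0 (snd z, fst z)" for z
    unfolding tensor_ext_def b_def fst_conv snd_conv by (subst sum.swap) (simp add: ac_simps)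
  have swap_E: "E b (y, x) = indicator S (x, y) * ((tensor_poly P W a 0 0 (x, y))\<^sup>2
      + (tensor_poly P W a 0 2 (x, y))\<^sup>2 + (tensor_poly P W a 0 4 (x, y))\<^sup>2)" for x y
    unfolding E_def tensor_poly_def b_def fst_conv snd_conv
    by (subst (1 2 3) sum.swap) (simp add: ac_simps S_def indicator_def)
  have "continuous_on UNIV (\<lambda>z. (tensor_ext P W b q 0 z)\<^sup>2)"
    using q by (intro continuous_intros continuous_on_tensor_ext) auto
  then have "(\<integral>z. (tensor_ext P W a 0 q z)\<^sup>2 \<partial>lborel) = (\<integral>z. (tensor_ext P W b q 0 z)\<^sup>2 \<partial>lborel)"
    using lborel_integral_swap[of "\<lambda>z. (tensor_ext P W b q 0 z)\<^sup>2"]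
    by (simp add: swap_ext borel_measurable_continuous_onI)
  also have "\<dots> \<le> C * (C * (\<integral>z. E b z \<partial>lborel))"
    using tensor_ext_sq_integral_fst[OF q] by (simp add: E_def set_lebesgue_integral_def)
  also have "(\<integral>z. E b z \<partial>lborel) = (\<integral>z. E b (snd z, fst z) \<partial>lborel)"
  proof -
    have "integrable lborel (E b)"
      unfolding E_def by (intro integrable_indicator_S) (simp add: tensor_poly_def, intro continuous_intros)
    then show ?thesis by (simp add: lborel_integral_swap borel_measurable_integrable)
  qed
  finally show ?thesis
    by (simp add: swap_E set_lebesgue_integral_def case_prod_beta)
qed

lemma tensor_ext_energy_le:
  "(\<integral>z. (tensor_ext P W a 4 0 z)\<^sup>2 + (tensor_ext P W a 0 4 z)\<^sup>2 + (tensor_ext P W a 2 0 z)\<^sup>2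
      + (tensor_ext P W a 0 2 z)\<^sup>2 + (tensor_ext P W a 0 0 z)\<^sup>2 \<partial>lborel)
   \<le> 5 * C * C * (LINT z:S|lborel. (tensor_poly P W a 4 0 z)\<^sup>2 + (tensor_poly P W a 0 4 z)\<^sup>2
      + (tensor_poly P W a 2 0 z)\<^sup>2 + (tensor_poly P W a 0 2 z)\<^sup>2 + (tensor_poly P W a 0 0 z)\<^sup>2)"
    (is "_ \<le> _ * (LINT z:S|lborel. ?E z)")
proof -
  have integrable_ext: "integrable lborel (\<lambda>z. (tensor_ext P W a p q z)\<^sup>2)" if "p \<le> 4" "q \<le> 4" for p q
    using L2_tensor_ext[OF that] by (simp add: L2_def)
  have mono: "(LINT z:S|lborel. F z) \<le> (LINT z:S|lborel. ?E z)"
    if "continuous_on UNIV F" "\<And>z. F z \<le> ?E z" for F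
    unfolding set_lebesgue_integral_def real_scaleR_def
  proof (rule integral_mono)
    show "integrable lborel (\<lambda>z. indicator S z * F z)" by (rule integrable_indicator_S[OF that(1)])
    show "integrable lborel (\<lambda>z. indicator S z * ?E z)"
      by (rule integrable_indicator_S) (simp add: tensor_poly_def, intro continuous_intros)
  qed (simp add: indicator_def that(2))
  have fst_bound: "(\<integral>z. (tensor_ext P W a p 0 z)\<^sup>2 \<partial>lborel) \<le> C * (C * (LINT z:S|lborel. ?E z))"
    if "p \<in> {0, 2, 4}" for p
  proof -
    note tensor_ext_sq_integral_fst[OF that, of P W a]
    also have "C * (C * (LINT z:S|lborel. (tensor_poly P W a 0 0 z)\<^sup>2 + (tensor_poly P W a 2 0 z)\<^sup>2
        + (tensor_poly P W a 4 0 z)\<^sup>2)) \<le> C * (C * (LINT z:S|lborel. ?E z))"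
      using C_nonneg by (intro mult_left_mono mono) (auto simp: tensor_poly_def intro!: continuous_intros)
    finally show ?thesis .
  qed
  have snd_bound: "(\<integral>z. (tensor_ext P W a 0 q z)\<^sup>2 \<partial>lborel) \<le> C * (C * (LINT z:S|lborel. ?E z))"
    if "q \<in> {0, 2, 4}" for q
  proof -
    note tensor_ext_sq_integral_snd[OF that, of P W a]
    also have "C * (C * (LINT z:S|lborel. (tensor_poly P W a 0 0 z)\<^sup>2 + (tensor_poly P W a 0 2 z)\<^sup>2
        + (tensor_poly P W a 0 4 z)\<^sup>2)) \<le> C * (C * (LINT z:S|lborel. ?E z))"
      using C_nonneg by (intro mult_left_mono mono) (auto simp: tensor_poly_def intro!: continuous_intros)
    finally show ?thesis .
  qed
  show ?thesis
    using fst_bound[of 4] fst_bound[of 2] fst_bound[of 0] snd_bound[of 4] snd_bound[of 2]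
    by (simp add: integrable_ext algebra_simps)
qed

lemma legendre_extension:
  "\<exists>U. (\<forall>z\<in>S. U z = leg_u W a z) \<and> H4 U \<and>
     (\<exists>g4x g4y g2x g2y.
        weak_pderiv [True, True, True, True] U g4x \<and>
        weak_pderiv [False, False, False, False] U g4y \<and>
        weak_pderiv [True, True] U g2x \<and>
        weak_pderiv [False, False] U g2y \<and>
        (\<integral>z. (g4x z)\<^sup>2 + (g4y z)\<^sup>2 + (g2x z)\<^sup>2 + (g2y z)\<^sup>2 + (U z)\<^sup>2 \<partial>lborel)
          \<le> 5 * C * C * (\<integral>z\<in>S. (dpars [True, True, True, True] (leg_u W a) z)\<^sup>2
                     + (dpars [False, False, False, False] (leg_u W a) z)\<^sup>2
                     + (dpars [True, True] (leg_u W a) z)\<^sup>2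
                     + (dpars [False, False] (leg_u W a) z)\<^sup>2
                     + (leg_u W a z)\<^sup>2 \<partial>lborel))"
proof (intro exI conjI)
  let ?U = "tensor_ext legendre W a"
  have derivs: "dpars [True, True, True, True] (leg_u W a) = tensor_poly legendre W a 4 0"
    "dpars [False, False, False, False] (leg_u W a) = tensor_poly legendre W a 0 4"
    "dpars [True, True] (leg_u W a) = tensor_poly legendre W a 2 0"
    "dpars [False, False] (leg_u W a) = tensor_poly legendre W a 0 2"
    by (simp_all add: leg_u_eq_tensor_poly dpars_tensor_poly numeral_eq_Suc)
  show "\<forall>z\<in>S. ?U 0 0 z = leg_u W a z"
    by (simp add: tensor_ext_on_S leg_u_eq_tensor_poly)
  show "H4 (?U 0 0)" by (rule H4_tensor_ext)
  show "weak_pderiv [True, True, True, True] (?U 0 0) (?U 4 0)"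
    and "weak_pderiv [False, False, False, False] (?U 0 0) (?U 0 4)"
    and "weak_pderiv [True, True] (?U 0 0) (?U 2 0)"
    and "weak_pderiv [False, False] (?U 0 0) (?U 0 2)"
    using weak_pderiv_tensor_ext[of "[True, True, True, True]" legendre W a]
      weak_pderiv_tensor_ext[of "[False, False, False, False]" legendre W a]
      weak_pderiv_tensor_ext[of "[True, True]" legendre W a]
      weak_pderiv_tensor_ext[of "[False, False]" legendre W a]
    by (simp_all add: numeral_eq_Suc)
  show "(\<integral>z. (?U 4 0 z)\<^sup>2 + (?U 0 4 z)\<^sup>2 + (?U 2 0 z)\<^sup>2 + (?U 0 2 z)\<^sup>2 + (?U 0 0 z)\<^sup>2 \<partial>lborel)
    \<le> 5 * C * C * (\<integral>z\<in>S. (dpars [True, True, True, True] (leg_u W a) z)\<^sup>2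
                     + (dpars [False, False, False, False] (leg_u W a) z)\<^sup>2
                     + (dpars [True, True] (leg_u W a) z)\<^sup>2
                     + (dpars [False, False] (leg_u W a) z)\<^sup>2
                     + (leg_u W a z)\<^sup>2 \<partial>lborel)"
    unfolding derivs unfolding leg_u_eq_tensor_poly by (rule tensor_ext_energy_le)
qed

end

theorem lemma2p1:
  shows "\<exists>K::real. \<forall>(W::nat) (a::nat \<Rightarrow> nat \<Rightarrow> real). W \<ge> 1 \<longrightarrow>
     (\<exists>U. (\<forall>z\<in>S. U z = leg_u W a z) \<and> H4 U \<and>
        (\<exists>g4x g4y g2x g2y.
           weak_pderiv [True, True, True, True] U g4x \<and>
           weak_pderiv [False, False, False, False] U g4y \<and>
           weak_pderiv [True, True] U g2x \<and>
           weak_pderiv [False, False] U g2y \<and>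
           (\<integral>z. (g4x z)\<^sup>2 + (g4y z)\<^sup>2 + (g2x z)\<^sup>2 + (g2y z)\<^sup>2 + (U z)\<^sup>2 \<partial>lborel)
             \<le> K * (\<integral>z\<in>S. (dpars [True, True, True, True] (leg_u W a) z)\<^sup>2
                        + (dpars [False, False, False, False] (leg_u W a) z)\<^sup>2
                        + (dpars [True, True] (leg_u W a) z)\<^sup>2
                        + (dpars [False, False] (leg_u W a) z)\<^sup>2
                        + (leg_u W a z)\<^sup>2 \<partial>lborel)))"
  \<comment> \<open>The construction works for every \<open>W\<close>.\<close>
  by (rule ext1_sq_integral_bounds, rule exI, intro allI impI, rule legendre_extension)

end
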